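(* Let $n>10$, $S=\{1,2,4\}\subset\mathbb Z_n$, and $\mathbb K$ a field of characteristic $0$ containing the $n$-th roots of unity. For every $m\ge2$ and every $\lambda$ with $\lambda^n=1$, the restricted boundary $\partial_m:\Omega_m^{(\lambda)}(\vec C_n^{1,2,4})\to\Omega_{m-1}^{(\lambda)}(\vec C_n^{1,2,4})$ has rank exactly $m$.
   Context: GLMY path complex over a field $\mathbb K$ of characteristic $0$: elementary paths $e_{v_0\cdots v_n}$, boundary $\partial e_{v_0\cdots v_n}=\sum_{j}(-1)^j e_{v_0\cdots\widehat{v_j}\cdots v_n}$, paths with two equal consecutive vertices set to $0$; $A_n(G)$ = span of paths along arrows of $G$; $\Omega_0=A_0$, $\Omega_1=A_1$, $\Omega_n=\{u\in A_n:\partial u\in A_{n-1}\}$. The circulant digraph $\vec{C}_n^S$ has vertex set $\mathbb Z_n$ and arrows $a\to a+s$, $s\in S$. $\tau$ is the chain automorphism induced by $a\mapsto a+1$ and $\Omega_m^{(\lambda)}=\{\alpha\in\Omega_m:\tau\alpha=\lambda\alpha\}$. *)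

theory Defs
  imports Complex_Main "HOL-Library.Function_Algebras"
begin

text \<open>GLMY path complex of the circulant digraph on Z_n (vertices 0..n-1), arrows a -> (a+s) mod n
  for s in S. Elementary paths are nat lists; chains are functions from paths to the field
  (coefficient of each elementary path).\<close>

definition circ_arrow :: "nat \<Rightarrow> nat set \<Rightarrow> nat \<Rightarrow> nat \<Rightarrow> bool" where
  "circ_arrow n S a b \<longleftrightarrow> a < n \<and> b < n \<and> (\<exists>s\<in>S. b = (a + s) mod n)"

definition allowed_path :: "nat \<Rightarrow> nat set \<Rightarrow> nat list \<Rightarrow> bool" where
  "allowed_path n S p \<longleftrightarrow> p \<noteq> [] \<and> set p \<subseteq> {..<n} \<and>
     (\<forall>i. Suc i < length p \<longrightarrow> circ_arrow n S (p ! i) (p ! Suc i))"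

definition regular_path :: "nat list \<Rightarrow> bool" where
  "regular_path p \<longleftrightarrow> (\<forall>i. Suc i < length p \<longrightarrow> p ! i \<noteq> p ! Suc i)"

definition paths_len :: "nat \<Rightarrow> nat \<Rightarrow> nat list set" where
  "paths_len n k = {p. length p = k \<and> set p \<subseteq> {..<n}}"

definition del_vertex :: "nat \<Rightarrow> nat list \<Rightarrow> nat list" where
  "del_vertex j p = take j p @ drop (Suc j) p"

definition path_bd :: "nat \<Rightarrow> (nat list \<Rightarrow> 'k::field) \<Rightarrow> nat list \<Rightarrow> 'k" where
  "path_bd n u q = (if regular_path q then
      (\<Sum>p\<in>paths_len n (Suc (length q)). \<Sum>j<length p.
          if del_vertex j p = q then (-1) ^ j * u p else 0)
    else 0)"

definition A_space :: "nat \<Rightarrow> nat set \<Rightarrow> nat \<Rightarrow> (nat list \<Rightarrow> 'k::field) set" where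
  "A_space n S m = {u. \<forall>p. u p \<noteq> 0 \<longrightarrow> allowed_path n S p \<and> length p = Suc m}"

definition Omega_space :: "nat \<Rightarrow> nat set \<Rightarrow> nat \<Rightarrow> (nat list \<Rightarrow> 'k::field) set" where
  "Omega_space n S m = {u \<in> A_space n S m. m \<le> 1 \<or> path_bd n u \<in> A_space n S (m - 1)}"

text \<open>tau: the chain map induced by a -> a+1, i.e. tau e_p = e_(p+1).\<close>
definition tau_shift :: "nat \<Rightarrow> (nat list \<Rightarrow> 'k::field) \<Rightarrow> nat list \<Rightarrow> 'k" where
  "tau_shift n u q = (if set q \<subseteq> {..<n} then u (map (\<lambda>v. (v + n - 1) mod n) q) else 0)"

definition Omega_eig :: "nat \<Rightarrow> nat set \<Rightarrow> nat \<Rightarrow> 'k::field \<Rightarrow> (nat list \<Rightarrow> 'k) set" where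
  "Omega_eig n S m lam = {u \<in> Omega_space n S m. tau_shift n u = (\<lambda>q. lam * u q)}"

definition chain_scale :: "'k::field \<Rightarrow> (nat list \<Rightarrow> 'k) \<Rightarrow> nat list \<Rightarrow> 'k" where
  "chain_scale c u = (\<lambda>q. c * u q)"

end

theory Submission
  imports Defs "HOL-Library.Multiset" "HOL-Number_Theory.Cong"
begin

(*
  Describe a path by its start vertex a and its word w of steps. A tau-eigenchain u with
  eigenvalue lam is then u (walk a w) = lam^-a U w for a function U on words over {1, 2, 4},
  and its boundary becomes an explicit operator word_bd on U: prepend a step, split a step
  into two, append a step. The Omega-condition says exactly that word_bd U vanishes on the
  words containing a step 3, 5, 6 or 8, i.e. that U changes sign when two distinct adjacent
  letters are swapped and vanishes on words containing 44. word_bd preserves both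
  relations, so the boundary is determined by its values on the sorted words 1^a 2^b 4^k
  with k <= 1, and these are explicit linear combinations of values of U on sorted words.
  The identities coming from boundary o boundary = 0 express all of them through the m
  values at 1^a 2^(m-2-a) 4 and 1^(m-2) 2, so the rank is at most m. Conversely, the chains
  whose coefficient on a {1, 2}-word with j ones is the sign of its sorting permutation
  (j <= m - 2 or j = m) lie in Omega, and their boundaries are triangular on those m test
  words, so the rank is at least m.
*)

section \<open>Paths as walks\<close>

definition diff_mod :: "nat \<Rightarrow> nat \<Rightarrow> nat \<Rightarrow> nat" where
  "diff_mod n y x = (y + n - x) mod n"

lemma diff_mod_less: "0 < n \<Longrightarrow> diff_mod n y x < n"
  by (simp add: diff_mod_def)

lemma add_diff_mod: "x \<le> n \<Longrightarrow> y < n \<Longrightarrow> (x + diff_mod n y x) mod n = y"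
proof -
  assume "x \<le> n" "y < n"
  then have "x + (y + n - x) = y + n" by simp
  then have "(x + (y + n - x)) mod n = y" using \<open>y < n\<close> by simp
  then show ?thesis by (simp add: diff_mod_def mod_add_right_eq)
qed

lemma diff_mod_add_left: "x < n \<Longrightarrow> s < n \<Longrightarrow> diff_mod n ((x + s) mod n) x = s"
proof -
  assume "x < n" "s < n"
  then have "(x + s) mod n + n - x = (x + s) mod n + (n - x)" by simp
  moreover have "(x + s + (n - x)) mod n = s" using \<open>x < n\<close> \<open>s < n\<close> by simp
  ultimately show ?thesis by (simp add: diff_mod_def mod_add_left_eq)
qed

lemma diff_mod_add_right: "y < n \<Longrightarrow> s \<le> n \<Longrightarrow> (diff_mod n y s + s) mod n = y"
  using add_diff_mod[of s n y] by (simp add: add.commute)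

lemma diff_mod_diff_mod: "y < n \<Longrightarrow> x < n \<Longrightarrow> diff_mod n y (diff_mod n y x) = x"
  using diff_mod_add_left[of "diff_mod n y x" n x] diff_mod_add_right[of y n x] diff_mod_less[of n]
  by fastforce

lemma add_mod_left_cancel_less:
  fixes n s t v :: nat
  assumes "s < n" "t < n" "(v + t) mod n = (v + s) mod n"
  shows "t = s"
proof -
  have "[v + t = v + s] (mod n)" using assms(3) unfolding cong_def .
  then have "[t = s] (mod n)" by (simp add: cong_add_lcancel_nat)
  then show ?thesis using assms(1,2) by (simp add: cong_def)
qed

lemma diff_mod_pos: "x < n \<Longrightarrow> y < n \<Longrightarrow> x \<noteq> y \<Longrightarrow> 0 < diff_mod n y x"
  using add_diff_mod[of x n y] by (metis add_0_right gr0I less_imp_le mod_less)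

fun walk :: "nat \<Rightarrow> nat \<Rightarrow> nat list \<Rightarrow> nat list" where
  "walk n a [] = [a]"
| "walk n a (s # w) = a # walk n ((a + s) mod n) w"

fun steps :: "nat \<Rightarrow> nat list \<Rightarrow> nat list" where
  "steps n (x # y # r) = diff_mod n y x # steps n (y # r)"
| "steps n _ = []"

lemma length_walk [simp]: "length (walk n a w) = Suc (length w)"
  by (induction w arbitrary: a) auto

lemma walk_not_Nil [simp]: "walk n a w \<noteq> []"
  by (cases w) auto

lemma hd_walk [simp]: "hd (walk n a w) = a"
  by (cases w) auto

lemma walk_nth_0 [simp]: "walk n a w ! 0 = a"
  by (cases w) auto

lemma set_walk_subset: "a < n \<Longrightarrow> set (walk n a w) \<subseteq> {..<n}"
  by (induction w arbitrary: a) auto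

lemma last_walk_less: "a < n \<Longrightarrow> last (walk n a w) < n"
  using set_walk_subset[of a n w] last_in_set[OF walk_not_Nil] by blast

lemma walk_nth_Suc: "i < length w \<Longrightarrow> walk n a w ! Suc i = (walk n a w ! i + w ! i) mod n"
proof (induction w arbitrary: a i)
  case (Cons s w)
  then show ?case by (cases i) auto
qed simp

lemma walk_append: "walk n a (w @ v) = walk n a w @ tl (walk n (last (walk n a w)) v)"
proof (induction w arbitrary: a)
  case Nil then show ?case by (cases v) auto
next
  case (Cons s w) then show ?case by (cases w) auto
qed

lemma length_steps: "length (steps n p) = length p - 1"
  by (induction n p rule: steps.induct) auto

lemma set_steps_subset: "0 < n \<Longrightarrow> set (steps n p) \<subseteq> {..<n}"
  by (induction n p rule: steps.induct) (auto simp: diff_mod_less)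

lemma walk_steps: "set p \<subseteq> {..<n} \<Longrightarrow> p \<noteq> [] \<Longrightarrow> walk n (hd p) (steps n p) = p"
  by (induction n p rule: steps.induct) (auto simp: add_diff_mod)

lemma steps_Cons_walk: "steps n (a # walk n b w) = diff_mod n b a # steps n (walk n b w)"
  by (cases w) auto

lemma steps_walk: "a < n \<Longrightarrow> set w \<subseteq> {..<n} \<Longrightarrow> steps n (walk n a w) = w"
  by (induction w arbitrary: a) (auto simp: steps_Cons_walk diff_mod_add_left)

lemma allowed_path_walk_iff:
  assumes S: "S \<subseteq> {..<n}" and a: "a < n" and w: "set w \<subseteq> {..<n}"
  shows "allowed_path n S (walk n a w) \<longleftrightarrow> set w \<subseteq> S"
proof -
  have arrow: "circ_arrow n S (walk n a w ! i) (walk n a w ! Suc i) \<longleftrightarrow> w ! i \<in> S"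
    if i: "i < length w" for i
  proof -
    have "walk n a w ! i < n" using set_walk_subset[OF a, of w] i by (simp add: subset_eq)
    moreover have "w ! i < n" using w i by (simp add: subset_eq)
    ultimately show ?thesis
      unfolding circ_arrow_def walk_nth_Suc[OF i]
      using S add_mod_left_cancel_less[of _ n "w ! i" "walk n a w ! i"] by auto
  qed
  have "allowed_path n S (walk n a w) \<longleftrightarrow> (\<forall>i<length w. w ! i \<in> S)"
    unfolding allowed_path_def using set_walk_subset[OF a] arrow by auto
  then show ?thesis by (auto simp: set_conv_nth)
qed

lemma allowed_path_iff_steps:
  assumes "S \<subseteq> {..<n}" "q \<noteq> []" "set q \<subseteq> {..<n}"
  shows "allowed_path n S q \<longleftrightarrow> set (steps n q) \<subseteq> S"
proof -
  have "hd q < n" "0 < n" using assms(2,3) by (cases q; auto)+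
  then show ?thesis
    using allowed_path_walk_iff[OF assms(1) \<open>hd q < n\<close> set_steps_subset[OF \<open>0 < n\<close>, of q]]
      walk_steps[OF assms(3,2)] by simp
qed

lemma regular_path_walk:
  assumes "set w \<subseteq> {0<..<n}"
  shows "regular_path (walk n a w)"
  unfolding regular_path_def
proof (intro allI impI)
  fix i assume "Suc i < length (walk n a w)"
  then have i: "i < length w" by simp
  then have wi: "0 < w ! i" "w ! i < n" using assms by (auto simp: subset_eq)
  define v where "v = walk n a w ! i"
  have step: "walk n a w ! Suc i = (v + w ! i) mod n" unfolding v_def by (rule walk_nth_Suc[OF i])
  show "walk n a w ! i \<noteq> walk n a w ! Suc i"
  proof
    assume "walk n a w ! i = walk n a w ! Suc i"
    then have "(v + w ! i) mod n = v" using step v_def by metis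
    then have "(v + w ! i) mod n = (v + 0) mod n" using wi by (metis mod_less_divisor mod_mod_trivial gr_zeroI less_zeroE add_0_right)
    then show False using add_mod_left_cancel_less[of 0 n "w ! i" v] wi by simp
  qed
qed

lemma set_steps_regular:
  assumes "regular_path q" "set q \<subseteq> {..<n}"
  shows "set (steps n q) \<subseteq> {0<..<n}"
  using assms
proof (induction n q rule: steps.induct)
  case (1 n x y r)
  have "x \<noteq> y" using "1.prems"(1) unfolding regular_path_def by (metis length_Cons nth_Cons_0 nth_Cons_Suc zero_less_Suc Suc_less_eq)
  moreover have "regular_path (y # r)"
    using "1.prems"(1) unfolding regular_path_def by (metis Suc_less_eq length_Cons nth_Cons_Suc)
  ultimately show ?case using 1 diff_mod_pos[of x n y] diff_mod_less[of n] by simp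
qed auto

definition insert_at :: "nat \<Rightarrow> nat \<Rightarrow> nat list \<Rightarrow> nat list" where
  "insert_at j x q = take j q @ x # drop j q"

lemma length_insert_at [simp]: "j \<le> length q \<Longrightarrow> length (insert_at j x q) = Suc (length q)"
  by (simp add: insert_at_def)

lemma nth_insert_at: "j \<le> length q \<Longrightarrow> insert_at j x q ! j = x"
  by (simp add: insert_at_def nth_append)

lemma del_vertex_insert_at: "j \<le> length q \<Longrightarrow> del_vertex j (insert_at j x q) = q"
  by (simp add: insert_at_def del_vertex_def)

lemma insert_at_del_vertex: "j < length p \<Longrightarrow> insert_at j (p ! j) (del_vertex j p) = p"
  by (simp add: insert_at_def del_vertex_def min_def id_take_nth_drop[symmetric])

lemma set_insert_at: "set (insert_at j x q) = insert x (set q)"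
  by (simp add: insert_at_def) (metis append_take_drop_id set_append Un_insert_right)

lemma set_del_vertex_subset: "set (del_vertex j p) \<subseteq> set p"
  by (auto simp: del_vertex_def dest: in_set_takeD in_set_dropD)

lemma finite_paths_len: "finite (paths_len n k)"
  using finite_lists_length_eq[of "{..<n}" k] by (simp add: paths_len_def conj_commute)

lemma path_bd_eq_0_outside:
  assumes "\<not> set q \<subseteq> {..<n}"
  shows "path_bd n u q = 0"
proof -
  have "del_vertex j p \<noteq> q" if "p \<in> paths_len n (Suc (length q))" for p j
    using assms that set_del_vertex_subset unfolding paths_len_def by blast
  then show ?thesis unfolding path_bd_def by simp
qed

lemma path_bd_eq_0_length:
  assumes "u \<in> A_space n S m" "length q \<noteq> m"
  shows "path_bd n u q = 0"
proof -
  have "u p = 0" if "p \<in> paths_len n (Suc (length q))" for p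
    using assms that unfolding A_space_def paths_len_def by fastforce
  then show ?thesis unfolding path_bd_def by (auto intro!: sum.neutral)
qed

lemma path_bd_insert_at:
  assumes q: "set q \<subseteq> {..<n}" and "regular_path q"
  shows "path_bd n u q = (\<Sum>j<Suc (length q). \<Sum>x<n. (-1) ^ j * u (insert_at j x q))"
proof -
  let ?P = "paths_len n (Suc (length q))"
  have fiber: "{p \<in> ?P. del_vertex j p = q} = (\<lambda>x. insert_at j x q) ` {..<n}"
    if j: "j \<le> length q" for j
  proof
    show "{p \<in> ?P. del_vertex j p = q} \<subseteq> (\<lambda>x. insert_at j x q) ` {..<n}"
    proof
      fix p assume "p \<in> {p \<in> ?P. del_vertex j p = q}"
      then have p: "length p = Suc (length q)" "set p \<subseteq> {..<n}" "del_vertex j p = q"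
        by (auto simp: paths_len_def)
      then have "p = insert_at j (p ! j) q" "p ! j < n"
        using insert_at_del_vertex[of j p] j by (auto simp: subset_eq)
      then show "p \<in> (\<lambda>x. insert_at j x q) ` {..<n}" by blast
    qed
  qed (use q j del_vertex_insert_at[OF j] in \<open>auto simp: paths_len_def set_insert_at\<close>)
  have "path_bd n u q = (\<Sum>p\<in>?P. \<Sum>j<Suc (length q). if del_vertex j p = q then (-1) ^ j * u p else 0)"
    using assms(2) unfolding path_bd_def if_P[OF assms(2)] by (intro sum.cong) (auto simp: paths_len_def)
  also have "\<dots> = (\<Sum>j<Suc (length q). \<Sum>p\<in>{p \<in> ?P. del_vertex j p = q}. (-1) ^ j * u p)"
    by (subst sum.swap) (simp add: sum.inter_filter[OF finite_paths_len])
  also have "\<dots> = (\<Sum>j<Suc (length q). \<Sum>x<n. (-1) ^ j * u (insert_at j x q))"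
  proof (rule sum.cong[OF refl])
    fix j assume "j \<in> {..<Suc (length q)}"
    then have j: "j \<le> length q" by simp
    have "inj_on (\<lambda>x. insert_at j x q) {..<n}"
      by (rule inj_onI) (metis nth_insert_at[OF j])
    then show "(\<Sum>p\<in>{p \<in> ?P. del_vertex j p = q}. (-1) ^ j * u p) = (\<Sum>x<n. (-1) ^ j * u (insert_at j x q))"
      unfolding fiber[OF j] by (simp add: sum.reindex)
  qed
  finally show ?thesis .
qed

section \<open>The chain space\<close>

interpretation chains: vector_space "chain_scale :: 'k::field \<Rightarrow> (nat list \<Rightarrow> 'k) \<Rightarrow> _"
  by unfold_locales (auto simp: chain_scale_def fun_eq_iff algebra_simps)

lemma chain_scale_apply [simp]: "chain_scale c u q = c * u q"
  by (simp add: chain_scale_def)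

lemma sum_chain_apply: "(\<Sum>x\<in>A. f x) q = (\<Sum>x\<in>A. f x q)"
  by (induction A rule: infinite_finite_induct) auto

lemma path_bd_add: "path_bd n (u + v) = path_bd n u + path_bd n v"
  by (rule ext) (auto simp: path_bd_def sum.distrib[symmetric] distrib_left intro!: sum.cong)

lemma path_bd_scale: "path_bd n (chain_scale c u) = chain_scale c (path_bd n u)"
  by (rule ext) (auto simp: path_bd_def sum_distrib_left mult.left_commute intro!: sum.cong)

lemma module_hom_path_bd: "module_hom chain_scale chain_scale (path_bd n :: (nat list \<Rightarrow> 'k::field) \<Rightarrow> _)"
  by (simp add: module_hom_iff chains.module_axioms path_bd_add path_bd_scale)

lemma tau_shift_add: "tau_shift n (u + v) = tau_shift n u + tau_shift n v"
  by (rule ext) (simp add: tau_shift_def)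

lemma tau_shift_scale: "tau_shift n (chain_scale c u) = chain_scale c (tau_shift n u)"
  by (rule ext) (simp add: tau_shift_def)

lemma subspace_A_space: "chains.subspace (A_space n S m)"
  unfolding chains.subspace_def A_space_def by (auto simp: func_zero) (metis add_0 add.right_neutral)+

lemma subspace_Omega_eig: "chains.subspace (Omega_eig n S m (lam::'k::field))"
proof -
  interpret bd: module_hom chain_scale chain_scale "path_bd n :: (nat list \<Rightarrow> 'k) \<Rightarrow> _"
    by (rule module_hom_path_bd)
  note A = chains.subspace_0[OF subspace_A_space] chains.subspace_add[OF subspace_A_space]
    chains.subspace_scale[OF subspace_A_space]
  show ?thesis
    unfolding chains.subspace_def Omega_eig_def Omega_space_def
    by (auto simp: A bd.zero bd.add bd.scale tau_shift_add tau_shift_scale fun_eq_iff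
        distrib_left mult.left_commute tau_shift_def[of n 0])
qed

lemma subspace_boundary_image: "chains.subspace (path_bd n ` Omega_eig n S m (lam::'k::field))"
  by (rule module_hom.subspace_image[OF module_hom_path_bd subspace_Omega_eig])

definition point_chain :: "nat list \<Rightarrow> nat list \<Rightarrow> 'k::field" where
  "point_chain q p = (if p = q then 1 else 0)"

definition restrict_chain :: "nat list set \<Rightarrow> (nat list \<Rightarrow> 'k::field) \<Rightarrow> nat list \<Rightarrow> 'k" where
  "restrict_chain Q v p = (if p \<in> Q then v p else 0)"

lemma module_hom_restrict_chain:
  "module_hom chain_scale chain_scale (restrict_chain Q :: (nat list \<Rightarrow> 'k::field) \<Rightarrow> _)"
  by (simp add: module_hom_iff chains.module_axioms restrict_chain_def fun_eq_iff)

lemma restrict_chain_in_span: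
  assumes "finite Q"
  shows "restrict_chain Q v \<in> chains.span ((point_chain :: nat list \<Rightarrow> nat list \<Rightarrow> 'k::field) ` Q)"
proof -
  have "restrict_chain Q v = (\<Sum>q\<in>Q. chain_scale (v q) (point_chain q))"
    using assms by (auto simp: fun_eq_iff sum_chain_apply restrict_chain_def point_chain_def if_distrib
        sum.delta cong: if_cong)
  also have "\<dots> \<in> chains.span (point_chain ` Q)"
    by (intro chains.span_sum chains.span_scale chains.span_base) auto
  finally show ?thesis .
qed

(* Restriction to Q embeds V into the span of the card Q point chains at Q. *)
lemma dim_eq_card_if_evaluation_injective:
  fixes V :: "(nat list \<Rightarrow> 'k::field) set"
  assumes V: "chains.subspace V" and Q: "finite Q" "card Q \<le> card T"
    and inj: "\<And>v. v \<in> V \<Longrightarrow> (\<forall>q\<in>Q. v q = 0) \<Longrightarrow> v = 0"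
    and T: "T \<subseteq> V" "chains.independent T" "finite T"
  shows "chains.dim V = card T"
proof -
  interpret E: module_hom chain_scale chain_scale "restrict_chain Q :: (nat list \<Rightarrow> 'k) \<Rightarrow> _"
    by (rule module_hom_restrict_chain)
  obtain B where B: "B \<subseteq> V" "chains.independent B" "V \<subseteq> chains.span B" "card B = chains.dim V"
    using chains.basis_exists by blast
  have "inj_on (restrict_chain Q) (chains.span B)"
  proof (rule inj_onI)
    fix x y assume xy: "x \<in> chains.span B" "y \<in> chains.span B" and eq: "restrict_chain Q x = restrict_chain Q y"
    have "(x - y) q = 0" if "q \<in> Q" for q using fun_cong[OF eq, of q] that by (simp add: restrict_chain_def)
    moreover have "x - y \<in> V"
      using chains.subspace_diff[OF V] xy chains.span_minimal[OF B(1) V] by blast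
    ultimately show "x = y" using inj[of "x - y"] by simp
  qed
  then have "chains.independent (restrict_chain Q ` B)" "inj_on (restrict_chain Q) B"
    using E.independent_injective_image[OF B(2)] chains.span_superset inj_on_subset by blast+
  moreover have "restrict_chain Q ` B \<subseteq> chains.span ((point_chain :: nat list \<Rightarrow> nat list \<Rightarrow> 'k) ` Q)"
    using restrict_chain_in_span[OF Q(1)] by blast
  ultimately have "finite B" "card B \<le> card Q"
    using chains.independent_span_bound[OF finite_imageI[OF Q(1)]] card_image_le[OF Q(1), of point_chain]
    by (metis card_image finite_imageD le_trans)+
  moreover have "card T \<le> card B"
    using chains.independent_span_bound[OF \<open>finite B\<close> T(2)] T(1) B(3) by blast
  ultimately show ?thesis using Q(2) B(4) by simp
qed

section \<open>Eigenchains in step coordinates\<close>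

definition supported :: "nat set \<Rightarrow> (nat list \<Rightarrow> 'k::zero) \<Rightarrow> bool" where
  "supported S U \<longleftrightarrow> (\<forall>w. U w \<noteq> 0 \<longrightarrow> set w \<subseteq> S)"

definition split_sum :: "nat \<Rightarrow> nat set \<Rightarrow> (nat list \<Rightarrow> 'k::field) \<Rightarrow> nat list \<Rightarrow> nat \<Rightarrow> nat list \<Rightarrow> 'k" where
  "split_sum n S U al t be = (\<Sum>s\<in>S. U (al @ s # diff_mod n t s # be))"

definition split_sum_at :: "nat \<Rightarrow> nat set \<Rightarrow> (nat list \<Rightarrow> 'k::field) \<Rightarrow> nat list \<Rightarrow> nat \<Rightarrow> 'k" where
  "split_sum_at n S U w i = split_sum n S U (take i w) (w ! i) (drop (Suc i) w)"

(* The boundary in step coordinates (path_bd_walk): a vertex inserted in front of a walk from a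
   moves its start to a - s and so contributes lam ^ s, an inner insertion splits a step into
   two, and an insertion at the end appends a step. *)
definition word_bd :: "nat \<Rightarrow> nat set \<Rightarrow> 'k::field \<Rightarrow> (nat list \<Rightarrow> 'k) \<Rightarrow> nat list \<Rightarrow> 'k" where
  "word_bd n S lam U w = (\<Sum>s\<in>S. lam ^ s * U (s # w))
     + (\<Sum>i<length w. (-1) ^ Suc i * split_sum_at n S U w i)
     + (-1) ^ Suc (length w) * (\<Sum>s\<in>S. U (w @ [s]))"

lemma sum_lessThan_reindex_add_mod: "e < (n::nat) \<Longrightarrow> (\<Sum>x<n. f x) = (\<Sum>s<n. f ((e + s) mod n))"
  by (rule sum.reindex_bij_witness[where i="\<lambda>s. (e + s) mod n" and j="\<lambda>x. diff_mod n x e"])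
     (auto simp: add_diff_mod diff_mod_add_left diff_mod_less)

lemma sum_lessThan_reindex_diff_mod: "a < (n::nat) \<Longrightarrow> (\<Sum>x<n. f x) = (\<Sum>s<n. f (diff_mod n a s))"
  by (rule sum.reindex_bij_witness[where i="diff_mod n a" and j="diff_mod n a"])
     (auto simp: diff_mod_diff_mod diff_mod_less)

lemma sum_lessThan_supported:
  "S \<subseteq> {..<n::nat} \<Longrightarrow> (\<And>s. s \<notin> S \<Longrightarrow> f s = 0) \<Longrightarrow> (\<Sum>s<n. f s) = (\<Sum>s\<in>S. f s)"
  by (rule sum.mono_neutral_right) auto

lemma inverse_power_diff_mod:
  fixes lam :: "'k::field"
  assumes lam: "lam ^ n = 1" and "a < n" "s \<le> n"
  shows "inverse lam ^ diff_mod n a s = inverse lam ^ a * lam ^ s"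
proof -
  let ?z = "inverse lam"
  have "?z ^ k = ?z ^ (k mod n)" for k
  proof -
    have "?z ^ k = ?z ^ (n * (k div n) + k mod n)" by simp
    also have "\<dots> = (?z ^ n) ^ (k div n) * ?z ^ (k mod n)" by (simp only: power_add power_mult)
    finally show ?thesis using lam by (simp add: power_inverse)
  qed
  then have "?z ^ diff_mod n a s * ?z ^ s = ?z ^ a"
    using diff_mod_add_right[OF assms(2,3)] by (metis power_add)
  moreover have "lam \<noteq> 0" using lam assms(2) by (metis gr_implies_not0 power_0_left zero_neq_one)
  ultimately show ?thesis by (simp add: field_simps power_inverse)
qed

lemma walk_snoc: "walk n a w @ [(last (walk n a w) + s) mod n] = walk n a (w @ [s])"
  by (simp add: walk_append)

lemma insert_at_walk:
  assumes "a < n" "i < length w" "s < n"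
  shows "insert_at (Suc i) ((last (walk n a (take i w)) + s) mod n) (walk n a w)
    = walk n a (take i w @ s # diff_mod n (w ! i) s # drop (Suc i) w)"
proof -
  let ?al = "take i w" and ?t = "w ! i" and ?be = "drop (Suc i) w"
  define e where "e = last (walk n a ?al)"
  have w: "w = ?al @ ?t # ?be" using assms(2) by (simp add: id_take_nth_drop)
  have "((e + s) mod n + diff_mod n ?t s) mod n = (e + ?t) mod n"
  proof -
    have "(e + s) + (?t + n - s) = (e + ?t) + n" using assms(3) by simp
    then show ?thesis unfolding diff_mod_def by (metis mod_add_eq mod_add_self2 mod_mod_trivial)
  qed
  moreover have "walk n a w = walk n a ?al @ walk n ((e + ?t) mod n) ?be"
    by (subst w, subst walk_append) (simp add: e_def)
  moreover have "length (walk n a ?al) = Suc i" using assms(2) by simp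
  ultimately show ?thesis
    by (simp add: insert_at_def walk_append e_def[symmetric])
qed

context
  fixes n :: nat and S :: "nat set" and lam :: "'k::field" and u U :: "nat list \<Rightarrow> 'k"
  assumes S: "S \<subseteq> {..<n}" and lam: "lam ^ n = 1" and U: "supported S U"
    and coords: "\<And>a w. a < n \<Longrightarrow> set w \<subseteq> {..<n} \<Longrightarrow> u (walk n a w) = inverse lam ^ a * U w"
begin

lemma sum_lessThan_coeffs:
  assumes "\<And>s. s \<in> set (v s)"
  shows "(\<Sum>s<n. f s * U (v s)) = (\<Sum>s\<in>S. f s * U (v s))"
  by (rule sum_lessThan_supported[OF S]) (use U assms in \<open>auto simp: supported_def\<close>)

lemma sum_prepend_walk:
  assumes a: "a < n" and w: "set w \<subseteq> {..<n}"
  shows "(\<Sum>x<n. u (x # walk n a w)) = inverse lam ^ a * (\<Sum>s\<in>S. lam ^ s * U (s # w))"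
proof -
  have "(\<Sum>x<n. u (x # walk n a w)) = (\<Sum>s<n. u (diff_mod n a s # walk n a w))"
    by (rule sum_lessThan_reindex_diff_mod[OF a])
  also have "\<dots> = (\<Sum>s<n. (inverse lam ^ a * lam ^ s) * U (s # w))"
  proof (intro sum.cong refl)
    fix s assume "s \<in> {..<n}"
    then have s: "s < n" by simp
    have "diff_mod n a s # walk n a w = walk n (diff_mod n a s) (s # w)"
      by (simp add: diff_mod_add_right[OF a less_imp_le[OF s]])
    then show "u (diff_mod n a s # walk n a w) = (inverse lam ^ a * lam ^ s) * U (s # w)"
      using coords[of "diff_mod n a s" "s # w"] a s w by (simp add: diff_mod_less inverse_power_diff_mod[OF lam a less_imp_le[OF s]])
  qed
  also have "\<dots> = (\<Sum>s\<in>S. (inverse lam ^ a * lam ^ s) * U (s # w))"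
    by (rule sum_lessThan_coeffs) simp
  finally show ?thesis by (simp add: sum_distrib_left mult.assoc)
qed

lemma sum_insert_walk:
  assumes a: "a < n" and w: "set w \<subseteq> {..<n}" and i: "i < length w"
  shows "(\<Sum>x<n. u (insert_at (Suc i) x (walk n a w))) = inverse lam ^ a * split_sum_at n S U w i"
proof -
  define e where "e = last (walk n a (take i w))"
  have e: "e < n" unfolding e_def by (rule last_walk_less[OF a])
  let ?w = "\<lambda>s. take i w @ s # diff_mod n (w ! i) s # drop (Suc i) w"
  have "(\<Sum>x<n. u (insert_at (Suc i) x (walk n a w))) = (\<Sum>s<n. u (insert_at (Suc i) ((e + s) mod n) (walk n a w)))"
    by (rule sum_lessThan_reindex_add_mod[OF e])
  also have "\<dots> = (\<Sum>s<n. u (walk n a (?w s)))"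
    by (intro sum.cong refl) (simp add: insert_at_walk[OF a i] e_def)
  also have "\<dots> = (\<Sum>s<n. inverse lam ^ a * U (?w s))"
  proof (intro sum.cong refl)
    fix s assume "s \<in> {..<n}"
    then have "set (?w s) \<subseteq> {..<n}"
      using w by (auto simp: diff_mod_less dest: in_set_takeD in_set_dropD)
    then show "u (walk n a (?w s)) = inverse lam ^ a * U (?w s)" by (rule coords[OF a])
  qed
  also have "\<dots> = (\<Sum>s\<in>S. inverse lam ^ a * U (?w s))"
    by (rule sum_lessThan_coeffs) simp
  finally show ?thesis by (simp add: split_sum_at_def split_sum_def sum_distrib_left)
qed

lemma sum_append_walk:
  assumes a: "a < n" and w: "set w \<subseteq> {..<n}"
  shows "(\<Sum>x<n. u (walk n a w @ [x])) = inverse lam ^ a * (\<Sum>s\<in>S. U (w @ [s]))"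
proof -
  have "(\<Sum>x<n. u (walk n a w @ [x])) = (\<Sum>s<n. u (walk n a w @ [(last (walk n a w) + s) mod n]))"
    by (rule sum_lessThan_reindex_add_mod[OF last_walk_less[OF a]])
  also have "\<dots> = (\<Sum>s<n. u (walk n a (w @ [s])))" by (simp add: walk_snoc)
  also have "\<dots> = (\<Sum>s<n. inverse lam ^ a * U (w @ [s]))"
    using a w by (intro sum.cong refl) (auto simp: coords)
  also have "\<dots> = (\<Sum>s\<in>S. inverse lam ^ a * U (w @ [s]))"
    by (rule sum_lessThan_coeffs) simp
  finally show ?thesis by (simp add: sum_distrib_left)
qed

lemma path_bd_walk:
  assumes a: "a < n" and w: "set w \<subseteq> {0<..<n}"
  shows "path_bd n u (walk n a w) = inverse lam ^ a * word_bd n S lam U w"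
proof -
  let ?q = "walk n a w" and ?L = "length w"
  define T where "T j = (\<Sum>x<n. (-1) ^ j * u (insert_at j x ?q))" for j
  have wn: "set w \<subseteq> {..<n}" using w by auto
  have "path_bd n u ?q = (\<Sum>j<Suc (Suc ?L). T j)"
    using path_bd_insert_at[OF set_walk_subset[OF a] regular_path_walk[OF w]] by (simp add: T_def)
  also have "\<dots> = T 0 + (\<Sum>i<Suc ?L. T (Suc i))" by (rule sum.lessThan_Suc_shift)
  also have "\<dots> = T 0 + (\<Sum>i<?L. T (Suc i)) + T (Suc ?L)" by simp
  also have "T 0 = inverse lam ^ a * (\<Sum>s\<in>S. lam ^ s * U (s # w))"
    using sum_prepend_walk[OF a wn] by (simp add: T_def insert_at_def)
  also have "(\<Sum>i<?L. T (Suc i)) = inverse lam ^ a * (\<Sum>i<?L. (-1) ^ Suc i * split_sum_at n S U w i)"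
    unfolding sum_distrib_left
  proof (intro sum.cong refl)
    fix i assume "i \<in> {..<?L}"
    then have "(\<Sum>x<n. u (insert_at (Suc i) x ?q)) = inverse lam ^ a * split_sum_at n S U w i"
      using sum_insert_walk[OF a wn] by simp
    moreover have "T (Suc i) = (-1) ^ Suc i * (\<Sum>x<n. u (insert_at (Suc i) x ?q))"
      by (simp only: T_def sum_distrib_left)
    ultimately show "T (Suc i) = inverse lam ^ a * ((-1) ^ Suc i * split_sum_at n S U w i)" by simp
  qed
  also have "T (Suc ?L) = inverse lam ^ a * ((-1) ^ Suc ?L * (\<Sum>s\<in>S. U (w @ [s])))"
    using sum_append_walk[OF a wn]
    by (simp add: T_def insert_at_def sum_distrib_left[symmetric] ac_simps del: power_Suc)
  finally show ?thesis by (simp add: word_bd_def algebra_simps)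
qed

lemma path_bd_eq_word_bd:
  assumes q: "regular_path q" "set q \<subseteq> {..<n}" "q \<noteq> []"
  shows "path_bd n u q = inverse lam ^ hd q * word_bd n S lam U (steps n q)"
proof -
  have "hd q < n" using q by (auto simp: subset_eq)
  then show ?thesis using path_bd_walk[OF \<open>hd q < n\<close> set_steps_regular[OF q(1,2)]] walk_steps[OF q(2,3)]
    by simp
qed

end

lemma map_diff_mod_walk: "b < n \<Longrightarrow> map (\<lambda>v. diff_mod n v 1) (walk n b w) = walk n (diff_mod n b 1) w"
proof (induction w arbitrary: b)
  case (Cons s w)
  have "diff_mod n ((b + s) mod n) 1 = (diff_mod n b 1 + s) mod n"
  proof -
    have "(b + s) mod n + n - 1 = (b + s) mod n + (n - 1)" "b + n - 1 = b + (n - 1)" using Cons.prems by auto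
    then show ?thesis unfolding diff_mod_def by (simp add: mod_simps ac_simps)
  qed
  then show ?case using Cons by simp
qed simp

lemma tau_shift_walk: "b < n \<Longrightarrow> tau_shift n u (walk n b w) = u (walk n (diff_mod n b 1) w)"
  using set_walk_subset[of b n w] map_diff_mod_walk[of b n w] by (simp add: tau_shift_def diff_mod_def)

definition word_coeffs :: "nat \<Rightarrow> nat set \<Rightarrow> nat \<Rightarrow> (nat list \<Rightarrow> 'k::zero) \<Rightarrow> nat list \<Rightarrow> 'k" where
  "word_coeffs n S m u w = (if set w \<subseteq> S \<and> length w = m then u (walk n 0 w) else 0)"

lemma supported_word_coeffs: "supported S (word_coeffs n S m u)"
  by (simp add: supported_def word_coeffs_def)

lemma Omega_eig_walk:
  fixes lam :: "'k::field"
  assumes S: "S \<subseteq> {..<n}" and lam: "lam ^ n = 1" and u: "u \<in> Omega_eig n S m lam"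
    and a: "a < n" and w: "set w \<subseteq> {..<n}"
  shows "u (walk n a w) = inverse lam ^ a * word_coeffs n S m u w"
proof -
  have uA: "u \<in> A_space n S m" and tau: "tau_shift n u = (\<lambda>q. lam * u q)"
    using u by (auto simp: Omega_eig_def Omega_space_def)
  have "lam \<noteq> 0" using lam a by (metis gr_implies_not0 power_0_left zero_neq_one)
  have shift: "u (walk n a w) = inverse lam ^ a * u (walk n 0 w)" using a
  proof (induction a)
    case (Suc a)
    have "tau_shift n u (walk n (Suc a) w) = u (walk n a w)"
      using tau_shift_walk[OF Suc.prems] Suc.prems by (simp add: diff_mod_def)
    then have "u (walk n (Suc a) w) = inverse lam * u (walk n a w)"
      using tau \<open>lam \<noteq> 0\<close> by (simp add: field_simps)
    then show ?case using Suc by simp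
  qed simp
  have "u (walk n 0 w) = 0" if "\<not> (set w \<subseteq> S \<and> length w = m)"
    using uA that allowed_path_walk_iff[OF S _ w, of 0] a by (fastforce simp: A_space_def)
  then show ?thesis using shift by (auto simp: word_coeffs_def)
qed

lemma path_bd_Omega_eig_walk:
  fixes lam :: "'k::field"
  assumes S: "S \<subseteq> {..<n}" and lam: "lam ^ n = 1" and u: "u \<in> Omega_eig n S m lam"
    and a: "a < n" and w: "set w \<subseteq> {0<..<n}"
  shows "path_bd n u (walk n a w) = inverse lam ^ a * word_bd n S lam (word_coeffs n S m u) w"
  using path_bd_walk[OF S lam supported_word_coeffs Omega_eig_walk[OF S lam u] a w] .

lemma split_sum_at_prefix:
  "i < length al \<Longrightarrow> split_sum_at n S U (al @ v) i = split_sum n S (\<lambda>x. U (x @ v)) (take i al) (al ! i) (drop (Suc i) al)"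
  by (simp add: split_sum_at_def split_sum_def nth_append)

lemma split_sum_at_suffix:
  "split_sum_at n S U (al @ v) (length al + k) = split_sum n S (\<lambda>x. U (al @ x)) (take k v) (v ! k) (drop (Suc k) v)"
  by (simp add: split_sum_at_def split_sum_def)

lemma sum_lessThan_add: "(\<Sum>i<a + (b::nat). f i) = (\<Sum>i<a. f i) + (\<Sum>k<b. f (a + k))"
  by (induction b) (simp_all add: add.assoc)

lemma word_bd_non_step:
  assumes U: "supported S U" and t: "t \<notin> S"
  shows "word_bd n S lam U (al @ t # be) = (-1) ^ Suc (length al) * split_sum n S U al t be"
proof -
  have U0: "U (x @ t # y) = 0" for x y using U t by (auto simp: supported_def)
  let ?f = "\<lambda>i. (-1) ^ Suc i * split_sum_at n S U (al @ t # be) i"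
  have "(\<Sum>i<length al. ?f i) = 0"
    using U0 by (simp add: split_sum_at_prefix split_sum_def)
  moreover have "?f (length al + Suc k) = 0" for k
    using U0[of al] split_sum_at_suffix[of n S U al "t # be" "Suc k"] by (simp add: split_sum_def)
  ultimately have "(\<Sum>i<length (al @ t # be). ?f i) = ?f (length al)"
    by (simp only: length_append sum_lessThan_add) (simp add: sum.lessThan_Suc_shift del: sum.lessThan_Suc)
  then show ?thesis using U0[of "_ # al"] U0[of al "be @ _"]
    by (simp add: word_bd_def split_sum_at_def)
qed

lemma allowed_if_path_bd_Omega_eig:
  assumes "u \<in> Omega_eig n S m lam" "m \<ge> 2" "path_bd n u q \<noteq> 0"
  shows "allowed_path n S q \<and> length q = m"
proof -
  have "path_bd n u \<in> A_space n S (m - 1)"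
    using assms(1,2) by (auto simp: Omega_eig_def Omega_space_def)
  then show ?thesis using assms(2,3) by (auto simp: A_space_def)
qed

lemma Omega_eig_split_sum_eq_0:
  fixes lam :: "'k::field"
  assumes S: "S \<subseteq> {0<..<n}" and lam: "lam ^ n = 1" and u: "u \<in> Omega_eig n S m lam"
    and m: "m \<ge> 2" and al: "set al \<subseteq> S" and be: "set be \<subseteq> S" and t: "t \<notin> S" "t \<in> {0<..<n}"
  shows "split_sum n S (word_coeffs n S m u) al t be = 0"
proof -
  let ?w = "al @ t # be"
  have S': "S \<subseteq> {..<n}" and w: "set ?w \<subseteq> {0<..<n}" and n: "0 < n" using S al be t by auto
  have "set ?w \<subseteq> {..<n}" using w by auto
  then have "\<not> allowed_path n S (walk n 0 ?w)" using allowed_path_walk_iff[OF S' n] t by auto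
  then have "path_bd n u (walk n 0 ?w) = 0" using allowed_if_path_bd_Omega_eig[OF u m] by blast
  moreover have "word_bd n S lam (word_coeffs n S m u) ?w
      = (-1) ^ Suc (length al) * split_sum n S (word_coeffs n S m u) al t be"
    by (rule word_bd_non_step[OF supported_word_coeffs t(1)])
  ultimately show ?thesis using path_bd_Omega_eig_walk[OF S' lam u n w] by simp
qed

lemma path_bd_Omega_eig_eq_0:
  fixes lam :: "'k::field"
  assumes S: "S \<subseteq> {0<..<n}" and lam: "lam ^ n = 1" and u: "u \<in> Omega_eig n S m lam" and m: "m \<ge> 2"
    and V0: "\<And>w. set w \<subseteq> S \<Longrightarrow> length w = m - 1 \<Longrightarrow> word_bd n S lam (word_coeffs n S m u) w = 0"
  shows "path_bd n u = 0"
proof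
  fix q
  show "path_bd n u q = 0 q"
  proof (rule ccontr)
    assume "path_bd n u q \<noteq> 0 q"
    then have q: "allowed_path n S q" "length q = m"
      using allowed_if_path_bd_Omega_eig[OF u m] by auto
    then have qn: "q \<noteq> []" "set q \<subseteq> {..<n}" "hd q < n" by (auto simp: allowed_path_def subset_eq)
    have S': "S \<subseteq> {..<n}" using S by auto
    have w: "set (steps n q) \<subseteq> S" using q(1) allowed_path_iff_steps[OF S' qn(1,2)] by simp
    then have "path_bd n u (walk n (hd q) (steps n q)) = 0"
      using path_bd_Omega_eig_walk[OF S' lam u qn(3)] V0[OF w] S q(2) by (auto simp: length_steps)
    then show False using \<open>path_bd n u q \<noteq> 0 q\<close> walk_steps[OF qn(2,1)] by simp
  qed
qed

definition step_chain :: "nat \<Rightarrow> 'k::field \<Rightarrow> (nat list \<Rightarrow> 'k) \<Rightarrow> nat list \<Rightarrow> 'k" where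
  "step_chain n lam U p = (if p \<noteq> [] \<and> set p \<subseteq> {..<n} then inverse lam ^ hd p * U (steps n p) else 0)"

lemma step_chain_walk:
  "a < n \<Longrightarrow> set w \<subseteq> {..<n} \<Longrightarrow> step_chain n lam U (walk n a w) = inverse lam ^ a * U w"
  using set_walk_subset[of a n w] steps_walk[of a n w] by (simp add: step_chain_def)

lemma word_coeffs_step_chain:
  assumes "S \<subseteq> {..<n}" "0 < n" "supported S U" "\<And>w. U w \<noteq> 0 \<Longrightarrow> length w = m"
  shows "word_coeffs n S m (step_chain n lam U) = U"
proof
  fix w
  show "word_coeffs n S m (step_chain n lam U) w = U w"
  proof (cases "set w \<subseteq> S \<and> length w = m")
    case True
    then have "set w \<subseteq> {..<n}" using assms(1) by auto
    then show ?thesis using True step_chain_walk[OF assms(2)] by (simp add: word_coeffs_def)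
  next
    case False
    then have "U w = 0" using assms(3,4) by (auto simp: supported_def)
    then show ?thesis using False by (auto simp: word_coeffs_def)
  qed
qed

lemma tau_shift_step_chain:
  fixes lam :: "'k::field"
  assumes lam: "lam ^ n = 1"
  shows "tau_shift n (step_chain n lam U) = (\<lambda>q. lam * step_chain n lam U q)"
proof
  fix q
  show "tau_shift n (step_chain n lam U) q = lam * step_chain n lam U q"
  proof (cases "q \<noteq> [] \<and> set q \<subseteq> {..<n}")
    case True
    then have "0 < n" by (cases q) auto
    then have q: "q = walk n (hd q) (steps n q)" "hd q < n" "0 < n" "set (steps n q) \<subseteq> {..<n}"
      using True walk_steps set_steps_subset by (auto simp: subset_eq)
    have "tau_shift n (step_chain n lam U) q = inverse lam ^ diff_mod n (hd q) 1 * U (steps n q)"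
      using tau_shift_walk[OF q(2), of _ "steps n q"] q(1) step_chain_walk[OF diff_mod_less[OF q(3)] q(4)]
      by metis
    also have "\<dots> = lam * step_chain n lam U q"
      using inverse_power_diff_mod[OF lam q(2), of 1] q(3) True by (simp add: step_chain_def ac_simps)
    finally show ?thesis .
  qed (auto simp: tau_shift_def step_chain_def)
qed

lemma step_chain_Omega_eig:
  fixes lam :: "'k::field"
  assumes S: "S \<subseteq> {0<..<n}" and lam: "lam ^ n = 1" and m: "m \<ge> 2"
    and U: "supported S U" and len: "\<And>w. U w \<noteq> 0 \<Longrightarrow> length w = m"
    and split: "\<And>al t be. t \<in> {0<..<n} \<Longrightarrow> t \<notin> S \<Longrightarrow> split_sum n S U al t be = 0"
  shows "step_chain n lam U \<in> Omega_eig n S m lam"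
proof -
  let ?X = "step_chain n lam U"
  have S': "S \<subseteq> {..<n}" using S by auto
  have A: "?X \<in> A_space n S m"
  proof -
    have "allowed_path n S p \<and> length p = Suc m" if "?X p \<noteq> 0" for p
    proof -
      have p: "p \<noteq> []" "set p \<subseteq> {..<n}" "U (steps n p) \<noteq> 0" using that by (auto simp: step_chain_def split: if_splits)
      then show ?thesis using allowed_path_iff_steps[OF S' p(1,2)] U len[OF p(3)]
        by (auto simp: supported_def length_steps)
    qed
    then show ?thesis by (auto simp: A_space_def)
  qed
  moreover have "allowed_path n S q \<and> length q = Suc (m - 1)" if bd: "path_bd n ?X q \<noteq> 0" for q
  proof -
    have q: "set q \<subseteq> {..<n}" "length q = m" "regular_path q"
      using bd path_bd_eq_0_outside apply blast
      using bd path_bd_eq_0_length[OF A] apply blast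
      using bd by (cases "regular_path q") (simp_all add: path_bd_def)
    then have "q \<noteq> []" using m by auto
    have "set (steps n q) \<subseteq> S"
    proof
      fix t assume "t \<in> set (steps n q)"
      then obtain al be where w: "steps n q = al @ t # be" by (meson split_list)
      have t: "t \<in> {0<..<n}" using set_steps_regular[OF q(3,1)] w by auto
      show "t \<in> S"
      proof (rule ccontr)
        assume "t \<notin> S"
        then have "word_bd n S lam U (steps n q) = 0"
          unfolding w word_bd_non_step[OF U \<open>t \<notin> S\<close>] using split[OF t \<open>t \<notin> S\<close>] by simp
        then show False
          using bd path_bd_eq_word_bd[OF S' lam U step_chain_walk q(3,1) \<open>q \<noteq> []\<close>] by simp
      qed
    qed
    then show ?thesis using allowed_path_iff_steps[OF S' \<open>q \<noteq> []\<close> q(1)] q(2) m by simp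
  qed
  ultimately show ?thesis
    using tau_shift_step_chain[OF lam] by (auto simp: Omega_eig_def Omega_space_def A_space_def)
qed

section \<open>The step set {1, 2, 4} and sorted words\<close>

definition S124 :: "nat set" where
  "S124 = {1, 2, 4}"

lemma sum_S124: "(\<Sum>s\<in>S124. f s) = f 1 + f 2 + f 4"
  by (simp add: S124_def add.assoc)

lemma S124_subset: "n > 10 \<Longrightarrow> S124 \<subseteq> {0<..<n}"
  by (auto simp: S124_def)

definition swap_antisymmetric :: "(nat list \<Rightarrow> 'k::field) \<Rightarrow> bool" where
  "swap_antisymmetric U \<longleftrightarrow>
    (\<forall>al be x y. x \<in> S124 \<longrightarrow> y \<in> S124 \<longrightarrow> x \<noteq> y \<longrightarrow> U (al @ x # y # be) = - U (al @ y # x # be))"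

definition vanishes_on_44 :: "(nat list \<Rightarrow> 'k::field) \<Rightarrow> bool" where
  "vanishes_on_44 U \<longleftrightarrow> (\<forall>al be. U (al @ 4 # 4 # be) = 0)"

lemma swap_antisymmetricD:
  "swap_antisymmetric U \<Longrightarrow> x \<in> S124 \<Longrightarrow> y \<in> S124 \<Longrightarrow> x \<noteq> y \<Longrightarrow> U (al @ x # y # be) = - U (al @ y # x # be)"
  unfolding swap_antisymmetric_def by blast

lemma vanishes_on_44D: "vanishes_on_44 U \<Longrightarrow> U (al @ 4 # 4 # be) = 0"
  unfolding vanishes_on_44_def by blast

lemma diff_mod_values:
  assumes "n > 10"
  shows "diff_mod n 1 1 = 0" "diff_mod n 1 2 = n - 1" "diff_mod n 1 4 = n - 3"
    "diff_mod n 2 1 = 1" "diff_mod n 2 2 = 0" "diff_mod n 2 4 = n - 2"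
    "diff_mod n 3 1 = 2" "diff_mod n 3 2 = 1" "diff_mod n 3 4 = n - 1"
    "diff_mod n 4 1 = 3" "diff_mod n 4 2 = 2" "diff_mod n 4 4 = 0"
    "diff_mod n 5 1 = 4" "diff_mod n 5 2 = 3" "diff_mod n 5 4 = 1"
    "diff_mod n 6 1 = 5" "diff_mod n 6 2 = 4" "diff_mod n 6 4 = 2"
    "diff_mod n 8 1 = 7" "diff_mod n 8 2 = 6" "diff_mod n 8 4 = 4"
  using assms by (simp_all add: diff_mod_def mod_Suc)

lemma split_sum_S124:
  assumes n: "n > 10" and U: "supported S124 U"
  shows "split_sum n S124 U al (Suc 0) be = 0"
    "split_sum n S124 U al 2 be = U (al @ 1 # 1 # be)"
    "split_sum n S124 U al 3 be = U (al @ 1 # 2 # be) + U (al @ 2 # 1 # be)"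
    "split_sum n S124 U al 4 be = U (al @ 2 # 2 # be)"
    "split_sum n S124 U al 5 be = U (al @ 1 # 4 # be) + U (al @ 4 # 1 # be)"
    "split_sum n S124 U al 6 be = U (al @ 2 # 4 # be) + U (al @ 4 # 2 # be)"
    "split_sum n S124 U al 8 be = U (al @ 4 # 4 # be)"
proof -
  have U0: "U (al @ s # t # be) = 0" if "t \<notin> S124" for s t
    using U that by (auto simp: supported_def)
  have "0 \<notin> S124 \<and> 3 \<notin> S124 \<and> 5 \<notin> S124 \<and> 6 \<notin> S124 \<and> 7 \<notin> S124
      \<and> n - 1 \<notin> S124 \<and> n - 2 \<notin> S124 \<and> n - 3 \<notin> S124"
    using n by (auto simp: S124_def)
  then show "split_sum n S124 U al (Suc 0) be = 0"
    "split_sum n S124 U al 2 be = U (al @ 1 # 1 # be)"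
    "split_sum n S124 U al 3 be = U (al @ 1 # 2 # be) + U (al @ 2 # 1 # be)"
    "split_sum n S124 U al 4 be = U (al @ 2 # 2 # be)"
    "split_sum n S124 U al 5 be = U (al @ 1 # 4 # be) + U (al @ 4 # 1 # be)"
    "split_sum n S124 U al 6 be = U (al @ 2 # 4 # be) + U (al @ 4 # 2 # be)"
    "split_sum n S124 U al 8 be = U (al @ 4 # 4 # be)"
    unfolding split_sum_def sum_S124 using diff_mod_values[OF n] U0 by simp_all
qed

lemma word_coeffs_relations:
  fixes lam :: "'k::field"
  assumes n: "n > 10" and lam: "lam ^ n = 1" and u: "u \<in> Omega_eig n S124 m lam" and m: "m \<ge> 2"
  shows "swap_antisymmetric (word_coeffs n S124 m u)" "vanishes_on_44 (word_coeffs n S124 m u)"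
proof -
  let ?U = "word_coeffs n S124 m u"
  have zero: "split_sum n S124 ?U al t be = 0"
    if "t \<in> {3, 5, 6, 8}" "set al \<subseteq> S124" "set be \<subseteq> S124" for al t be
    using Omega_eig_split_sum_eq_0[OF S124_subset[OF n] lam u m that(2,3)] that(1) n
    by (auto simp: S124_def)
  note split = split_sum_S124[OF n supported_word_coeffs]
  show "swap_antisymmetric ?U"
    unfolding swap_antisymmetric_def
  proof (intro allI impI)
    fix al be x y assume xy: "x \<in> S124" "y \<in> S124" "x \<noteq> y"
    show "?U (al @ x # y # be) = - ?U (al @ y # x # be)"
    proof (cases "set al \<subseteq> S124 \<and> set be \<subseteq> S124")
      case True
      have "x = 1 \<or> x = 2 \<or> x = 4" "y = 1 \<or> y = 2 \<or> y = 4" using xy by (auto simp: S124_def)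
      moreover have "?U (al @ 1 # 2 # be) + ?U (al @ 2 # 1 # be) = 0"
        using zero[of 3 al be] True by (simp add: split(3))
      moreover have "?U (al @ 1 # 4 # be) + ?U (al @ 4 # 1 # be) = 0"
        using zero[of 5 al be] True by (simp add: split(5))
      moreover have "?U (al @ 2 # 4 # be) + ?U (al @ 4 # 2 # be) = 0"
        using zero[of 6 al be] True by (simp add: split(6))
      ultimately show ?thesis using xy(3) by (auto simp: eq_neg_iff_add_eq_0 add.commute)
    next
      case False
      then show ?thesis by (auto simp: word_coeffs_def)
    qed
  qed
  show "vanishes_on_44 ?U"
    unfolding vanishes_on_44_def
  proof (intro allI)
    fix al be
    show "?U (al @ 4 # 4 # be) = 0"
      using zero[of 8 al be] by (cases "set al \<subseteq> S124 \<and> set be \<subseteq> S124")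
        (auto simp: split(7) word_coeffs_def)
  qed
qed

lemma sum_lessThan_length_pair:
  "(\<Sum>i<length (al @ x # y # be). f i)
    = (\<Sum>i<length al. f i) + f (length al) + f (Suc (length al)) + (\<Sum>k<length be. f (Suc (Suc (length al + k))))"
proof -
  have "(\<Sum>k<Suc (Suc (length be)). f (length al + k))
      = f (length al) + f (Suc (length al)) + (\<Sum>k<length be. f (Suc (Suc (length al + k))))"
    by (simp only: sum.lessThan_Suc_shift) (simp add: add.assoc)
  then show ?thesis
    unfolding length_append sum_lessThan_add[of f "length al"] length_Cons by (simp only: add.assoc)
qed

lemma split_sum_at_pair:
  shows "split_sum_at n S U (al @ x # y # be) (length al) = split_sum n S U al x (y # be)"
    and "split_sum_at n S U (al @ x # y # be) (Suc (length al)) = split_sum n S U (al @ [x]) y be"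
    and "split_sum_at n S U (al @ x # y # be) (Suc (Suc (length al + k)))
      = split_sum n S (\<lambda>v. U (al @ x # y # v)) (take k be) (be ! k) (drop (Suc k) be)"
  using split_sum_at_suffix[of n S U al "x # y # be" 1] split_sum_at_suffix[of n S U al "x # y # be" "Suc (Suc k)"]
  by (simp_all add: split_sum_at_def split_sum_def)

lemma split_sum_swap_middle:
  assumes n: "n > 10" and U: "supported S124 U" and anti: "swap_antisymmetric U"
    and xy: "x \<in> S124" "y \<in> S124" "x \<noteq> y"
  shows "split_sum n S124 U al x (y # be) + split_sum n S124 U al y (x # be)
    = split_sum n S124 U (al @ [x]) y be + split_sum n S124 U (al @ [y]) x be"
proof -
  have S: "1 \<in> S124" "2 \<in> S124" "4 \<in> S124" by (auto simp: S124_def)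
  have "U (al @ 1 # 2 # 2 # be) = U (al @ 2 # 2 # 1 # be)"
    using swap_antisymmetricD[OF anti S(1,2), of al "2 # be"] swap_antisymmetricD[OF anti S(1,2), of "al @ [2]" be]
    by simp
  moreover have "U (al @ 1 # 1 # 4 # be) = U (al @ 4 # 1 # 1 # be)"
    using swap_antisymmetricD[OF anti S(1,3), of "al @ [1]" be] swap_antisymmetricD[OF anti S(1,3), of al "1 # be"]
    by simp
  moreover have "x = 1 \<or> x = 2 \<or> x = 4" "y = 1 \<or> y = 2 \<or> y = 4" using xy by (auto simp: S124_def)
  ultimately show ?thesis using xy(3) by (auto simp: split_sum_S124[OF n U])
qed

lemma word_bd_swap:
  assumes n: "n > 10" and U: "supported S124 U" and anti: "swap_antisymmetric U"
    and xy: "x \<in> S124" "y \<in> S124" "x \<noteq> y"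
  shows "word_bd n S124 lam U (al @ x # y # be) = - word_bd n S124 lam U (al @ y # x # be)"
proof -
  let ?w1 = "al @ x # y # be" and ?w2 = "al @ y # x # be"
  let ?f = "\<lambda>i. (-1) ^ Suc i * (split_sum_at n S124 U ?w1 i + split_sum_at n S124 U ?w2 i)"
  note swap = swap_antisymmetricD[OF anti xy]
  have "(\<Sum>i<length ?w1. (-1) ^ Suc i * split_sum_at n S124 U ?w1 i)
      + (\<Sum>i<length ?w2. (-1) ^ Suc i * split_sum_at n S124 U ?w2 i) = (\<Sum>i<length ?w1. ?f i)"
    unfolding distrib_left sum.distrib by simp
  also have "\<dots> = (\<Sum>i<length al. ?f i) + (?f (length al) + ?f (Suc (length al)))
      + (\<Sum>k<length be. ?f (Suc (Suc (length al + k))))"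
    by (simp only: sum_lessThan_length_pair add.assoc)
  also have "\<dots> = 0"
  proof -
    have "(\<Sum>i<length al. ?f i) = 0"
      using swap by (simp add: split_sum_at_prefix split_sum_def sum.distrib[symmetric])
    moreover have "(\<Sum>k<length be. ?f (Suc (Suc (length al + k)))) = 0"
      using swap by (simp add: split_sum_at_pair(3) split_sum_def sum.distrib[symmetric])
    moreover have "?f (length al) + ?f (Suc (length al)) = 0"
      using split_sum_swap_middle[OF n U anti xy, of al be] by (simp add: split_sum_at_pair algebra_simps)
    ultimately show ?thesis by simp
  qed
  finally have "(\<Sum>i<length ?w1. (-1) ^ Suc i * split_sum_at n S124 U ?w1 i)
      + (\<Sum>i<length ?w2. (-1) ^ Suc i * split_sum_at n S124 U ?w2 i) = 0" .
  moreover have "(\<Sum>s\<in>S124. lam ^ s * U (s # ?w1)) = - (\<Sum>s\<in>S124. lam ^ s * U (s # ?w2))"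
    using swap[of "_ # al" be] by (simp add: sum_negf[symmetric])
  moreover have "(\<Sum>s\<in>S124. U (?w1 @ [s])) = - (\<Sum>s\<in>S124. U (?w2 @ [s]))"
    using swap[of al "be @ _"] by (simp add: sum_negf[symmetric])
  ultimately show ?thesis unfolding word_bd_def by (simp add: algebra_simps)
qed

lemma word_bd_44:
  assumes n: "n > 10" and U: "supported S124 U" and anti: "swap_antisymmetric U" and van: "vanishes_on_44 U"
  shows "word_bd n S124 lam U (al @ 4 # 4 # be) = 0"
proof -
  let ?w = "al @ 4 # 4 # be"
  let ?f = "\<lambda>i. (-1) ^ Suc i * split_sum_at n S124 U ?w i"
  note zero = vanishes_on_44D[OF van]
  have S: "2 \<in> S124" "4 \<in> S124" "(2::nat) \<noteq> 4" by (auto simp: S124_def)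
  have "U (al @ 2 # 2 # 4 # be) = U (al @ 4 # 2 # 2 # be)"
    using swap_antisymmetricD[OF anti S, of "al @ [2]" be] swap_antisymmetricD[OF anti S, of al "2 # be"] by simp
  then have middle: "?f (length al) + ?f (Suc (length al)) = 0"
    unfolding split_sum_at_pair split_sum_S124[OF n U] by simp
  have "(\<Sum>i<length ?w. ?f i) = (\<Sum>i<length al. ?f i) + (?f (length al) + ?f (Suc (length al)))
      + (\<Sum>k<length be. ?f (Suc (Suc (length al + k))))"
    by (simp only: sum_lessThan_length_pair add.assoc)
  also have "\<dots> = 0"
    using zero middle by (simp add: split_sum_at_prefix split_sum_at_pair(3) split_sum_def)
  finally show ?thesis using zero[of "_ # al"] zero[of al "be @ _"] by (simp add: word_bd_def)
qed

lemma word_bd_relations: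
  assumes "n > 10" "supported S124 U" "swap_antisymmetric U" "vanishes_on_44 U"
  shows "swap_antisymmetric (word_bd n S124 lam U)" "vanishes_on_44 (word_bd n S124 lam U)"
  unfolding swap_antisymmetric_def vanishes_on_44_def
  using word_bd_swap[OF assms(1-3)] word_bd_44[OF assms] by blast+

definition sorted_word :: "nat \<Rightarrow> nat \<Rightarrow> nat \<Rightarrow> nat list" where
  "sorted_word a b k = replicate a 1 @ replicate b 2 @ replicate k 4"

lemma length_sorted_word [simp]: "length (sorted_word a b k) = a + b + k"
  by (simp add: sorted_word_def)

lemma sorted_sorted_word: "sorted (sorted_word a b k)"
  by (auto simp: sorted_word_def sorted_append)

lemma set_sorted_word_subset: "set (sorted_word a b k) \<subseteq> S124"
  by (auto simp: sorted_word_def S124_def)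

lemma sorted_word_eq_0_44:
  assumes "k \<ge> 2" "vanishes_on_44 U"
  shows "U (sorted_word a b k) = 0"
proof -
  obtain j where k: "k = j + 2" using assms(1) by (metis le_add_diff_inverse2)
  have "sorted_word a b k = (replicate a 1 @ replicate b 2 @ replicate j 4) @ 4 # 4 # []"
    unfolding sorted_word_def k replicate_add by (simp add: numeral_2_eq_2)
  then show ?thesis using vanishes_on_44D[OF assms(2)] by metis
qed

lemma count_list_replicate: "count_list (replicate a v) x = (if v = x then a else 0)"
  by (induction a) auto

lemma sorted_S124_eq_sorted_word:
  assumes "sorted w" "set w \<subseteq> S124"
  shows "w = sorted_word (count_list w 1) (count_list w 2) (count_list w 4)"
proof -
  have "mset (sorted_word (count_list w 1) (count_list w 2) (count_list w 4)) = mset w"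
  proof (rule multiset_eqI)
    fix x
    have "x \<notin> set w" if "x \<notin> S124" using assms(2) that by auto
    then show "count (mset (sorted_word (count_list w 1) (count_list w 2) (count_list w 4))) x = count (mset w) x"
      by (cases "x \<in> S124") (auto simp: S124_def sorted_word_def count_mset count_list_replicate)
  qed
  then show ?thesis
    using properties_for_sort sorted_sorted_word sorted_sort_id[OF assms(1)] by metis
qed

fun inversions :: "nat list \<Rightarrow> nat" where
  "inversions [] = 0"
| "inversions (x # w) = length (filter (\<lambda>y. y < x) w) + inversions w"

lemma inversions_swap: "y < x \<Longrightarrow> inversions (al @ x # y # be) = Suc (inversions (al @ y # x # be))"
  by (induction al) simp_all

lemma inversions_sorted: "sorted w \<Longrightarrow> inversions w = 0"
  by (induction w) (auto simp: filter_empty_conv)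

lemma eq_0_if_eq_0_on_sorted_words:
  fixes V :: "nat list \<Rightarrow> 'k::field"
  assumes anti: "swap_antisymmetric V" and van: "vanishes_on_44 V"
    and sorted: "\<And>a b k. k \<le> 1 \<Longrightarrow> a + b + k = L \<Longrightarrow> V (sorted_word a b k) = 0"
  shows "set w \<subseteq> S124 \<Longrightarrow> length w = L \<Longrightarrow> V w = 0"
proof (induction "inversions w" arbitrary: w rule: less_induct)
  case less
  show ?case
  proof (cases "sorted w")
    case True
    then obtain a b k where w: "w = sorted_word a b k"
      using sorted_S124_eq_sorted_word less.prems(1) by blast
    then have "a + b + k = L" using less.prems(2) by simp
    then show ?thesis
      using w sorted sorted_word_eq_0_44[OF _ van] by (cases "k \<le> 1") auto
  next
    case False
    then obtain i where i: "Suc i < length w" "w ! Suc i < w ! i"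
      unfolding sorted_iff_nth_Suc by (auto simp: not_le)
    obtain al x y be where w: "w = al @ x # y # be" and yx: "y < x"
      using id_take_nth_drop[OF Suc_lessD[OF i(1)]] Cons_nth_drop_Suc[OF i(1)] i(2) by metis
    then have xy: "x \<in> S124" "y \<in> S124" using less.prems(1) by auto
    have "V (al @ y # x # be) = 0"
      using inversions_swap[OF yx, of al be] w less.prems by (intro less.hyps) auto
    then show ?thesis using swap_antisymmetricD[OF anti xy, of al be] yx w by simp
  qed
qed

lemma move_right_past_replicate:
  assumes anti: "swap_antisymmetric U" and xy: "x \<in> S124" "y \<in> S124" "x \<noteq> y"
  shows "U (al @ x # replicate r y @ be) = (-1) ^ r * U (al @ replicate r y @ x # be)"
proof (induction r arbitrary: al)
  case (Suc r)
  have "U (al @ x # replicate (Suc r) y @ be) = - U ((al @ [y]) @ x # replicate r y @ be)"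
    using swap_antisymmetricD[OF anti xy, of al "replicate r y @ be"] by simp
  also have "\<dots> = - ((-1) ^ r * U ((al @ [y]) @ replicate r y @ x # be))" by (simp only: Suc.IH)
  also have "(al @ [y]) @ replicate r y @ x # be = al @ replicate (Suc r) y @ x # be"
    by (simp add: replicate_append_same[symmetric])
  finally show ?case by simp
qed simp

lemma move_left_past_replicate:
  assumes "swap_antisymmetric U" "x \<in> S124" "y \<in> S124" "x \<noteq> y"
  shows "U (al @ replicate r y @ x # be) = (-1) ^ r * U (al @ x # replicate r y @ be)"
  using move_right_past_replicate[OF assms, of al r be] by (simp add: power_mult_distrib[symmetric])

lemma prepend_sorted_word:
  assumes anti: "swap_antisymmetric U"
  shows "(\<Sum>s\<in>S124. lam ^ s * U (s # sorted_word a b k))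
    = lam * U (sorted_word (a + 1) b k) + lam ^ 2 * (-1) ^ a * U (sorted_word a (b + 1) k)
      + lam ^ 4 * (-1) ^ (a + b) * U (sorted_word a b (k + 1))"
proof -
  have S: "1 \<in> S124" "2 \<in> S124" "4 \<in> S124" by (auto simp: S124_def)
  note move = move_right_past_replicate[OF anti]
  have "U (2 # sorted_word a b k) = (-1) ^ a * U (sorted_word a (b + 1) k)"
    using move[OF S(2,1), of "[]" a] by (simp add: sorted_word_def)
  moreover have "U (4 # sorted_word a b k) = (-1) ^ (a + b) * U (sorted_word a b (k + 1))"
    using move[OF S(3,1), of "[]" a] move[OF S(3,2), of "replicate a 1" b] by (simp add: sorted_word_def power_add)
  ultimately show ?thesis by (simp add: sum_S124 sorted_word_def)
qed

lemma append_sorted_word: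
  assumes anti: "swap_antisymmetric U"
  shows "(\<Sum>s\<in>S124. U (sorted_word a b k @ [s]))
    = (-1) ^ (k + b) * U (sorted_word (a + 1) b k) + (-1) ^ k * U (sorted_word a (b + 1) k)
      + U (sorted_word a b (k + 1))"
proof -
  have S: "1 \<in> S124" "2 \<in> S124" "4 \<in> S124" by (auto simp: S124_def)
  note move = move_left_past_replicate[OF anti]
  have "U (sorted_word a b k @ [2]) = (-1) ^ k * U (sorted_word a (b + 1) k)"
    using move[OF S(2,3), of "replicate a 1 @ replicate b 2" k "[]"]
    by (simp add: sorted_word_def replicate_append_same[symmetric])
  moreover have "U (sorted_word a b k @ [1]) = (-1) ^ (k + b) * U (sorted_word (a + 1) b k)"
    using move[OF S(1,3), of "replicate a 1 @ replicate b 2" k "[]"] move[OF S(1,2), of "replicate a 1" b]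
    by (simp add: sorted_word_def power_add replicate_append_same[symmetric])
  ultimately show ?thesis by (simp add: sum_S124 sorted_word_def replicate_append_same)
qed

lemma split_sum_at_sorted_word_1:
  assumes "n > 10" "supported S124 U" "i < a"
  shows "split_sum_at n S124 U (sorted_word a b k) i = 0"
proof -
  have "sorted_word a b k ! i = Suc 0" using assms(3) by (simp add: sorted_word_def nth_append)
  then show ?thesis by (simp add: split_sum_at_def split_sum_S124(1)[OF assms(1,2)])
qed

lemma split_sum_at_sorted_word_2:
  assumes n: "n > 10" and U: "supported S124 U" and anti: "swap_antisymmetric U" and j: "j < b"
  shows "split_sum_at n S124 U (sorted_word a b k) (a + j) = U (sorted_word (a + 2) (b - 1) k)"
proof -
  let ?be = "replicate (b - Suc j) 2 @ replicate k 4"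
  have S: "1 \<in> S124" "2 \<in> S124" by (auto simp: S124_def)
  note move = move_left_past_replicate[OF anti S, of _ j]
  have "split_sum_at n S124 U (sorted_word a b k) (a + j) = U ((replicate a 1 @ replicate j 2) @ 1 # 1 # ?be)"
    using j by (simp add: split_sum_at_def sorted_word_def nth_append split_sum_S124(2)[OF n U])
  also have "\<dots> = (-1) ^ j * U (replicate a 1 @ 1 # replicate j 2 @ 1 # ?be)"
    using move[of "replicate a 1" "1 # ?be"] by simp
  also have "\<dots> = (-1) ^ j * ((-1) ^ j * U ((replicate a 1 @ [1]) @ 1 # replicate j 2 @ ?be))"
    using move[of "replicate a 1 @ [1]" ?be] by simp
  also have "(replicate a 1 @ [1]) @ 1 # replicate j 2 @ ?be = sorted_word (a + 2) (b - 1) k"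
  proof -
    have "replicate j (2::nat) @ replicate (b - Suc j) 2 = replicate (b - 1) 2"
      using j by (simp add: replicate_add[symmetric])
    then show ?thesis by (simp add: sorted_word_def replicate_append_same numeral_2_eq_2)
  qed
  finally show ?thesis by (simp add: power_mult_distrib[symmetric])
qed

lemma split_sum_at_sorted_word_4:
  assumes "n > 10" "supported S124 U"
  shows "split_sum_at n S124 U (sorted_word a b 1) (a + b) = U (sorted_word a (b + 2) 0)"
proof -
  have "(replicate a 1 @ replicate b 2) @ [2, 2] = sorted_word a (b + 2) 0"
    unfolding sorted_word_def replicate_add by (simp add: eval_nat_numeral)
  then show ?thesis
    by (simp add: split_sum_at_def sorted_word_def nth_append split_sum_S124(4)[OF assms])
qed

lemma split_terms_sorted_word:
  assumes n: "n > 10" and U: "supported S124 U" and anti: "swap_antisymmetric U" and k: "k \<le> 1"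
  shows "(\<Sum>i<length (sorted_word a b k). (-1) ^ Suc i * split_sum_at n S124 U (sorted_word a b k) i)
    = - (if odd b then (-1) ^ a * U (sorted_word (a + 2) (b - 1) k) else 0)
      - (if k = 1 then (-1) ^ (a + b) * U (sorted_word a (b + 2) 0) else 0)"
proof -
  let ?f = "\<lambda>i. (-1) ^ Suc i * split_sum_at n S124 U (sorted_word a b k) i"
  have "(\<Sum>j<b. ?f (a + j)) = - ((-1) ^ a * (\<Sum>j<b. (-1) ^ j)) * U (sorted_word (a + 2) (b - 1) k)"
    using split_sum_at_sorted_word_2[OF n U anti]
    by (simp add: sum_distrib_right sum_distrib_left power_add mult.assoc sum_negf)
  moreover have "(\<Sum>j<b. (-1) ^ j) = (if odd b then 1 else 0 :: 'a)"
    by (induction b) auto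
  moreover have "(\<Sum>l<k. ?f (a + b + l)) = (if k = 1 then (-1) ^ Suc (a + b) * U (sorted_word a (b + 2) 0) else 0)"
    using k split_sum_at_sorted_word_4[OF n U] by (cases k) auto
  moreover have "(\<Sum>i<a. ?f i) = 0"
    using split_sum_at_sorted_word_1[OF n U] by simp
  ultimately show ?thesis
    by (simp add: sum_lessThan_add add.assoc)
qed

(* word_bd at 1^a 2^b 4^k, k <= 1, in terms of the values c a b k of U at sorted words:
   prepending, splitting one of the 2s (these terms alternate in sign, so only the parity of b
   survives), splitting the 4, appending. *)
definition sorted_word_bd :: "'k::field \<Rightarrow> (nat \<Rightarrow> nat \<Rightarrow> nat \<Rightarrow> 'k) \<Rightarrow> nat \<Rightarrow> nat \<Rightarrow> nat \<Rightarrow> 'k" where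
  "sorted_word_bd lam c a b k =
     lam * c (a + 1) b k + lam ^ 2 * (-1) ^ a * c a (b + 1) k + lam ^ 4 * (-1) ^ (a + b) * c a b (k + 1)
     - (if odd b then (-1) ^ a * c (a + 2) (b - 1) k else 0)
     - (if k = 1 then (-1) ^ (a + b) * c a (b + 2) 0 else 0)
     + (-1) ^ Suc (a + b + k) * ((-1) ^ (k + b) * c (a + 1) b k + (-1) ^ k * c a (b + 1) k + c a b (k + 1))"

lemma word_bd_sorted_word:
  assumes "n > 10" "supported S124 U" "swap_antisymmetric U" "k \<le> 1"
  shows "word_bd n S124 lam U (sorted_word a b k) = sorted_word_bd lam (\<lambda>a b k. U (sorted_word a b k)) a b k"
  unfolding word_bd_def sorted_word_bd_def prepend_sorted_word[OF assms(3)] append_sorted_word[OF assms(3)]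
    split_terms_sorted_word[OF assms]
  by (simp add: algebra_simps)

(* boundary o boundary = 0, read at 1^p 2^d 4 and at 1^p 2, and at the empty word after
   division by lam - 1. *)
lemma sorted_word_bd_relation_4:
  fixes c :: "nat \<Rightarrow> nat \<Rightarrow> nat \<Rightarrow> 'k::field"
  assumes c2: "\<And>a b. c a b 2 = 0"
  shows "- ((-1) ^ (p + d) * sorted_word_bd lam c p (d + 2) 0) + (lam - (-1) ^ p) * sorted_word_bd lam c (p + 1) d 1
     + (-1) ^ p * (lam ^ 2 - (-1) ^ d) * sorted_word_bd lam c p (d + 1) 1
     + (if odd d then - ((-1) ^ p * sorted_word_bd lam c (p + 2) (d - 1) 1) else 0) = 0"
proof -
  have c2': "\<And>a b. c a b (Suc (Suc 0)) = 0" using c2 by (simp add: numeral_2_eq_2)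
  obtain f e where "p = 2 * f \<or> p = 2 * f + 1" "d = 2 * e \<or> d = 2 * e + 1" by (metis oddE evenE)
  then consider "p = 2 * f" "d = 2 * e" | "p = 2 * f" "d = 2 * e + 1"
    | "p = 2 * f + 1" "d = 2 * e" | "p = 2 * f + 1" "d = 2 * e + 1"
    by blast
  then show ?thesis
  proof cases
    case 1 show ?thesis unfolding sorted_word_bd_def 1(1) 1(2) by (simp add: c2 c2' power_add power_mult) algebra
  next
    case 2 show ?thesis unfolding sorted_word_bd_def 2(1) 2(2) by (simp add: c2 c2' power_add power_mult) algebra
  next
    case 3 show ?thesis unfolding sorted_word_bd_def 3(1) 3(2) by (simp add: c2 c2' power_add power_mult) algebra
  next
    case 4 show ?thesis unfolding sorted_word_bd_def 4(1) 4(2) by (simp add: c2 c2' power_add power_mult) algebra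
  qed
qed

lemma sorted_word_bd_relation_2:
  fixes c :: "nat \<Rightarrow> nat \<Rightarrow> nat \<Rightarrow> 'k::field"
  assumes c2: "\<And>a b. c a b 2 = 0"
  shows "- ((-1) ^ p * sorted_word_bd lam c (p + 2) 0 0) + (lam - (-1) ^ p) * sorted_word_bd lam c (p + 1) 1 0
     + (-1) ^ p * (lam ^ 2 + 1) * sorted_word_bd lam c p 2 0 - (-1) ^ p * (lam ^ 4 - 1) * sorted_word_bd lam c p 1 1 = 0"
proof -
  have c2': "\<And>a b. c a b (Suc (Suc 0)) = 0" using c2 by (simp add: numeral_2_eq_2)
  obtain f where "p = 2 * f \<or> p = 2 * f + 1" by (metis oddE evenE)
  then consider "p = 2 * f" | "p = 2 * f + 1" by blast
  then show ?thesis
  proof cases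
    case 1 show ?thesis
      unfolding sorted_word_bd_def 1
      by (simp add: c2 c2' power_add power_mult numeral_2_eq_2[symmetric] numeral_3_eq_3[symmetric]) algebra
  next
    case 2 show ?thesis
      unfolding sorted_word_bd_def 2
      by (simp add: c2 c2' power_add power_mult numeral_2_eq_2[symmetric] numeral_3_eq_3[symmetric]) algebra
  qed
qed

lemma sorted_word_bd_relation_empty:
  fixes c :: "nat \<Rightarrow> nat \<Rightarrow> nat \<Rightarrow> 'k::field"
  assumes c2: "\<And>a b. c a b 2 = 0"
  shows "(lam + 1) * sorted_word_bd lam c 0 1 0 + sorted_word_bd lam c 1 0 0
    + (lam + 1) * (lam ^ 2 + 1) * sorted_word_bd lam c 0 0 1 = 0"
proof -
  have c2': "\<And>a b. c a b (Suc (Suc 0)) = 0" using c2 by (simp add: numeral_2_eq_2)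
  show ?thesis
    unfolding sorted_word_bd_def
    by (simp add: c2 c2' numeral_2_eq_2[symmetric] numeral_3_eq_3[symmetric]) algebra
qed

lemma sorted_word_bd_eq_0:
  fixes c :: "nat \<Rightarrow> nat \<Rightarrow> nat \<Rightarrow> 'k::field"
  assumes m: "m \<ge> 2" and c2: "\<And>a b. c a b 2 = 0"
    and test4: "\<And>a. a \<le> m - 2 \<Longrightarrow> sorted_word_bd lam c a (m - 2 - a) 1 = 0"
    and test2: "sorted_word_bd lam c (m - 2) 1 0 = 0"
    and k: "k \<le> 1" and len: "a + b + k = m - 1"
  shows "sorted_word_bd lam c a b k = 0"
proof -
  let ?Z = "sorted_word_bd lam c"
  have long: "?Z p (d + 2) 0 = 0" if md: "m = p + 3 + d" for p d
  proof -
    have "?Z (p + 1) d 1 = 0" "?Z p (d + 1) 1 = 0" "odd d \<Longrightarrow> ?Z (p + 2) (d - 1) 1 = 0"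
      using test4[of "p + 1"] test4[of p] test4[of "p + 2"] md by (auto elim: oddE)
    then show ?thesis using sorted_word_bd_relation_4[where c=c and p=p and d=d and lam=lam, OF c2] by (cases "odd d") auto
  qed
  consider "k = 1" | "k = 0" "a + 3 \<le> m" | "k = 0" "a = m - 2" | "k = 0" "a = m - 1" "m \<ge> 3" | "k = 0" "a = 1" "m = 2"
    using k len m by linarith
  then show ?thesis
  proof cases
    case 1
    then have "b = m - 2 - a" "a \<le> m - 2" using len by auto
    then show ?thesis using test4[of a] 1 by simp
  next
    case 2
    then obtain d where "m = a + 3 + d" by (metis add.commute le_Suc_ex)
    then show ?thesis using long[of a d] len 2(1) by (simp add: eval_nat_numeral)
  next
    case 3
    then have "b = 1" using len m by linarith
    then show ?thesis using test2 3 by simp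
  next
    case 4
    then obtain p where p: "m = p + 3" by (metis add.commute le_Suc_ex)
    have "?Z (p + 1) 1 0 = 0" "?Z p 2 0 = 0" "?Z p 1 1 = 0"
      using test2 long[of p 0] test4[of p] p by (simp_all add: eval_nat_numeral)
    then have "?Z (p + 2) 0 0 = 0" using sorted_word_bd_relation_2[where c=c and p=p and lam=lam, OF c2] by simp
    then show ?thesis using 4 p len by (simp add: eval_nat_numeral)
  next
    case 5
    have "?Z 0 1 0 = 0" "?Z 0 0 1 = 0" using test2 test4[of 0] 5 by simp_all
    then show ?thesis using sorted_word_bd_relation_empty[where c=c and lam=lam, OF c2] 5 len by simp
  qed
qed

section \<open>The rank of the boundary\<close>

definition test_words :: "nat \<Rightarrow> nat list set" where
  "test_words m = insert (sorted_word (m - 2) 1 0) ((\<lambda>a. sorted_word a (m - 2 - a) 1) ` {..m - 2})"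

lemma card_test_words:
  assumes "m \<ge> 2"
  shows "card (test_words m) \<le> m"
proof -
  have "card ((\<lambda>a. sorted_word a (m - 2 - a) 1) ` {..m - 2}) \<le> m - 1"
    using card_image_le[of "{..m - 2}" "\<lambda>a. sorted_word a (m - 2 - a) 1"] assms by simp
  then show ?thesis using assms unfolding test_words_def by (simp add: card_insert_if) linarith
qed

lemma boundary_eq_0_if_vanishes_on_test_words:
  fixes lam :: "'k::field"
  assumes n: "n > 10" and lam: "lam ^ n = 1" and m: "m \<ge> 2"
    and v: "v \<in> path_bd n ` Omega_eig n S124 m lam" and test: "\<forall>w\<in>test_words m. v (walk n 0 w) = 0"
  shows "v = 0"
proof -
  obtain u where u: "u \<in> Omega_eig n S124 m lam" and vu: "v = path_bd n u" using v by blast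
  let ?U = "word_coeffs n S124 m u"
  let ?V = "word_bd n S124 lam ?U" and ?c = "\<lambda>a b k. ?U (sorted_word a b k)"
  note S = S124_subset[OF n]
  note rel = word_coeffs_relations[OF n lam u m]
  have sorted_bd: "?V (sorted_word a b k) = sorted_word_bd lam ?c a b k" if "k \<le> 1" for a b k
    using word_bd_sorted_word[OF n supported_word_coeffs rel(1) that] .
  have "v (walk n 0 w) = ?V w" if "set w \<subseteq> S124" for w
  proof -
    have "S124 \<subseteq> {..<n}" "set w \<subseteq> {0<..<n}" "0 < n" using S that n by auto
    then show ?thesis using path_bd_Omega_eig_walk[OF _ lam u] vu by simp
  qed
  then have test_bd: "?V w = 0" if "w \<in> test_words m" for w
    using test that set_sorted_word_subset by (auto simp: test_words_def)
  have "?V (sorted_word a b k) = 0" if "k \<le> 1" "a + b + k = m - 1" for a b k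
    unfolding sorted_bd[OF that(1)]
  proof (rule sorted_word_bd_eq_0[OF m _ _ _ that])
    show "?c a b 2 = 0" for a b using sorted_word_eq_0_44[OF _ rel(2)] by simp
    show "sorted_word_bd lam ?c a (m - 2 - a) 1 = 0" if "a \<le> m - 2" for a
      using test_bd[of "sorted_word a (m - 2 - a) 1"] sorted_bd[of 1] that by (simp add: test_words_def)
    show "sorted_word_bd lam ?c (m - 2) 1 0 = 0"
      using test_bd[of "sorted_word (m - 2) 1 0"] sorted_bd[of 0] by (simp add: test_words_def)
  qed
  then have "?V w = 0" if "set w \<subseteq> S124" "length w = m - 1" for w
    using eq_0_if_eq_0_on_sorted_words[OF word_bd_relations[OF n supported_word_coeffs rel]] sorted_bd that
    by metis
  then show ?thesis using path_bd_Omega_eig_eq_0[OF S lam u m] vu by blast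
qed

definition sort_sign :: "nat \<Rightarrow> nat \<Rightarrow> nat list \<Rightarrow> 'k::field" where
  "sort_sign m j w =
    (if length w = m \<and> set w \<subseteq> {1, 2} \<and> count_list w 1 = j then (-1) ^ inversions w else 0)"

lemma supported_sort_sign: "supported S124 (sort_sign m j)"
  by (auto simp: supported_def sort_sign_def S124_def)

lemma sort_sign_relations: "swap_antisymmetric (sort_sign m j)" "vanishes_on_44 (sort_sign m j)"
proof -
  have swap: "sort_sign m j (al @ x # y # be) = - sort_sign m j (al @ y # x # be)" if "y < x" for al be x y
    using inversions_swap[OF that] by (simp add: sort_sign_def conj_commute insert_commute)
  show "swap_antisymmetric (sort_sign m j)"
    unfolding swap_antisymmetric_def
    using swap by (metis linorder_neqE_nat minus_minus)
  show "vanishes_on_44 (sort_sign m j)" by (simp add: vanishes_on_44_def sort_sign_def)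
qed

lemma sort_sign_sorted_word:
  "sort_sign m j (sorted_word a b k) = (if k = 0 \<and> a + b = m \<and> a = j then 1 else 0)"
proof -
  have "set (sorted_word a b k) \<subseteq> {1, 2} \<longleftrightarrow> k = 0" by (cases k) (auto simp: sorted_word_def)
  moreover have "count_list (sorted_word a b k) 1 = a" by (simp add: sorted_word_def count_list_replicate)
  ultimately show ?thesis
    by (auto simp: sort_sign_def inversions_sorted[OF sorted_sorted_word])
qed

lemma split_sum_sort_sign:
  assumes n: "n > 10" and t: "t \<in> {0<..<n}" "t \<notin> S124"
  shows "split_sum n S124 (sort_sign m j :: nat list \<Rightarrow> 'k::field) al t be = 0"
proof (cases "t = 3")
  case True
  have "1 \<in> S124" "2 \<in> S124" by (auto simp: S124_def)
  then have "sort_sign m j (al @ 1 # 2 # be) + (sort_sign m j (al @ 2 # 1 # be) :: 'k) = 0"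
    using swap_antisymmetricD[OF sort_sign_relations(1), of 1 2 m j al be] by (simp only: eq_neg_iff_add_eq_0) simp
  then show ?thesis using True by (simp only: split_sum_S124(3)[OF n supported_sort_sign])
next
  case False
  have "diff_mod n t s \<notin> {1, 2}" if "s \<in> {1, 2}" for s
  proof (cases "s \<le> t")
    case True
    have eq: "t + n - s = (t - s) + n" using True by simp
    have "t - s < n" using t by auto
    then have "diff_mod n t s = t - s" unfolding diff_mod_def eq by simp
    then show ?thesis using t False True that by (auto simp: S124_def)
  next
    case False
    then have "t = 1" "s = 2" using t that by auto
    then show ?thesis using n by (auto simp: diff_mod_def)
  qed
  then show ?thesis by (auto simp: split_sum_def sort_sign_def intro!: sum.neutral)
qed

lemma length_sort_sign: "sort_sign m j w \<noteq> 0 \<Longrightarrow> length w = m"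
  by (simp add: sort_sign_def split: if_splits)

lemma step_chain_sort_sign_Omega_eig:
  fixes lam :: "'k::field"
  assumes "n > 10" "lam ^ n = 1" "m \<ge> 2"
  shows "step_chain n lam (sort_sign m j) \<in> Omega_eig n S124 m lam"
proof (rule step_chain_Omega_eig[OF S124_subset[OF assms(1)] assms(2,3) supported_sort_sign])
  show "length w = m" if "sort_sign m j w \<noteq> (0::'k)" for w using that by (rule length_sort_sign)
  show "split_sum n S124 (sort_sign m j) al t be = (0::'k)" if "t \<in> {0<..<n}" "t \<notin> S124" for al t be
    using split_sum_sort_sign[OF assms(1) that] .
qed

lemma path_bd_step_chain_sort_sign_sorted_word:
  fixes lam :: "'k::field"
  assumes n: "n > 10" and lam: "lam ^ n = 1" and m: "m \<ge> 2" and k: "k \<le> 1"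
  shows "path_bd n (step_chain n lam (sort_sign m j)) (walk n 0 (sorted_word a b k))
    = sorted_word_bd lam (\<lambda>a b k. sort_sign m j (sorted_word a b k)) a b k"
proof -
  have "S124 \<subseteq> {..<n}" "0 < n" "set (sorted_word a b k) \<subseteq> {0<..<n}"
    using S124_subset[OF n] set_sorted_word_subset[of a b k] n by auto
  then show ?thesis
    using path_bd_Omega_eig_walk[OF _ lam step_chain_sort_sign_Omega_eig[OF n lam m]]
      word_bd_sorted_word[OF n supported_sort_sign sort_sign_relations(1) k]
    by (simp add: word_coeffs_step_chain[OF _ _ supported_sort_sign length_sort_sign])
qed

lemma path_bd_step_chain_sort_sign_test_words:
  fixes lam :: "'k::field"
  assumes n: "n > 10" and lam: "lam ^ n = 1" and m: "m \<ge> 2"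
  shows "a \<le> m - 2 \<Longrightarrow> path_bd n (step_chain n lam (sort_sign m j)) (walk n 0 (sorted_word a (m - 2 - a) 1))
      = (if a = j then - ((-1) ^ m) else 0)"
    and "path_bd n (step_chain n lam (sort_sign m m)) (walk n 0 (sorted_word (m - 2) 1 0)) = - ((-1) ^ m)"
proof -
  have sign: "(-1 :: 'k) ^ (m - 2) = (-1) ^ m" using m by (metis le_add_diff_inverse2 power_add power_minus1_even mult_1_right)
  show "a \<le> m - 2 \<Longrightarrow> path_bd n (step_chain n lam (sort_sign m j)) (walk n 0 (sorted_word a (m - 2 - a) 1))
      = (if a = j then - ((-1) ^ m) else 0)"
    using path_bd_step_chain_sort_sign_sorted_word[OF n lam m, of 1 j a "m - 2 - a"] m sign
    by (auto simp: sorted_word_bd_def sort_sign_sorted_word)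
  show "path_bd n (step_chain n lam (sort_sign m m)) (walk n 0 (sorted_word (m - 2) 1 0)) = - ((-1) ^ m)"
    using path_bd_step_chain_sort_sign_sorted_word[OF n lam m, of 0 m "m - 2" 1] m sign
    by (auto simp: sorted_word_bd_def sort_sign_sorted_word)
qed

lemma independent_sort_sign_boundaries:
  fixes lam :: "'k::field"
  assumes n: "n > 10" and lam: "lam ^ n = 1" and m: "m \<ge> 2"
  defines "h \<equiv> \<lambda>j. path_bd n (step_chain n lam (sort_sign m j))"
  shows "inj_on h (insert m {..m - 2})" "chains.independent (h ` insert m {..m - 2})"
proof -
  let ?J = "insert m {..m - 2}" and ?\<sigma> = "- ((-1) ^ m) :: 'k"
  let ?P = "\<lambda>a. walk n 0 (sorted_word a (m - 2 - a) 1)" and ?P' = "walk n 0 (sorted_word (m - 2) 1 0)"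
  have test: "h j (?P a) = (if a = j then ?\<sigma> else 0)" if "a \<le> m - 2" for a j
    using path_bd_step_chain_sort_sign_test_words(1)[OF n lam m that] by (simp add: h_def)
  have test': "h m ?P' = ?\<sigma>"
    using path_bd_step_chain_sort_sign_test_words(2)[OF n lam m] by (simp add: h_def)
  show inj: "inj_on h ?J"
  proof (rule inj_onI)
    fix i j assume ij: "i \<in> ?J" "j \<in> ?J" "h i = h j"
    show "i = j"
    proof (rule ccontr)
      assume "i \<noteq> j"
      have "h a (?P a) \<noteq> h b (?P a)" if "a \<le> m - 2" "a \<noteq> b" for a b
        using test[OF that(1), of a] test[OF that(1), of b] that(2) by simp
      moreover consider "i \<le> m - 2" | "j \<le> m - 2" using ij(1,2) \<open>i \<noteq> j\<close> by auto
      ultimately show False using ij(3) \<open>i \<noteq> j\<close> by metis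
    qed
  qed
  show "chains.independent (h ` ?J)"
  proof (rule chains.independent_if_scalars_zero)
    fix f x assume sum: "(\<Sum>x\<in>h ` ?J. chain_scale (f x) x) = 0" and x: "x \<in> h ` ?J"
    have "(\<Sum>j\<in>?J. chain_scale (f (h j)) (h j)) = 0"
      using sum by (subst (asm) sum.reindex_cong[OF inj refl refl])
    then have eval: "(\<Sum>j\<in>?J. f (h j) * h j p) = 0" for p
      using sum_chain_apply[of "\<lambda>j. chain_scale (f (h j)) (h j)" ?J p] by simp
    have low: "f (h a) = 0" if a: "a \<le> m - 2" for a
    proof -
      have "(\<Sum>j\<in>?J. f (h j) * h j (?P a)) = (\<Sum>j\<in>?J. if j = a then f (h a) * ?\<sigma> else 0)"
        using test[OF a] by (intro sum.cong) auto
      also have "\<dots> = f (h a) * ?\<sigma>" using a by (simp add: sum.delta)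
      finally have "(\<Sum>j\<in>?J. f (h j) * h j (?P a)) = f (h a) * ?\<sigma>" .
      then show ?thesis using eval[of "?P a"] by simp
    qed
    have "(\<Sum>j\<in>?J. f (h j) * h j ?P') = f (h m) * ?\<sigma>"
      using low test' m by (subst sum.insert) (auto intro: sum.neutral)
    then have "f (h m) = 0" using eval[of ?P'] by simp
    then show "f x = 0" using x low by auto
  qed simp
qed

theorem mainTheorem14:
  fixes n m :: nat and lam :: "'k::field_char_0"
  assumes "n > 10"
    and "card {x::'k. x ^ n = 1} = n"
    and "m \<ge> 2"
    and "lam ^ n = 1"
  shows "vector_space.dim chain_scale (path_bd n ` Omega_eig n {1, 2, 4} m lam) = m"
proof -
  note n = assms(1) and m = assms(3) and lam = assms(4)
  let ?h = "\<lambda>j. path_bd n (step_chain n lam (sort_sign m j))" and ?J = "insert m {..m - 2}"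
  note indep = independent_sort_sign_boundaries[OF n lam m]
  have "card (?h ` ?J) = m" using card_image[OF indep(1)] m by simp
  moreover have "chains.dim (path_bd n ` Omega_eig n S124 m lam) = card (?h ` ?J)"
  proof (rule dim_eq_card_if_evaluation_injective[OF subspace_boundary_image])
    show "finite (walk n 0 ` test_words m)" by (simp add: test_words_def)
    show "card (walk n 0 ` test_words m) \<le> card (?h ` ?J)"
      using card_image_le[of "test_words m" "walk n 0"] card_test_words[OF m] \<open>card (?h ` ?J) = m\<close>
      by (simp add: test_words_def)
    show "v = 0" if "v \<in> path_bd n ` Omega_eig n S124 m lam" "\<forall>q\<in>walk n 0 ` test_words m. v q = 0" for v
      using boundary_eq_0_if_vanishes_on_test_words[OF n lam m that(1)] that(2) by blast
    show "?h ` ?J \<subseteq> path_bd n ` Omega_eig n S124 m lam"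
      using step_chain_sort_sign_Omega_eig[OF n lam m] by blast
  qed (use indep in auto)
  ultimately show ?thesis by (simp add: S124_def)
qed

end
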